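(* Let $q$ be a power of a prime $p$ and let $h(x) = x^8 + a_1x^7 + a_2x^6 + a_3x^5 + a_4x^4 + a_3qx^3 + a_2q^2x^2 + a_1q^3x + q^4$ with $a_1,\dots,a_4 \in \mathbb{Z}$. Consider the inequalities: (a) $|a_1| \leq 8\sqrt{q}$; (b* ) $6\sqrt{q}\,|a_1| - 20q \leq a_2$; (b) $a_2 \leq \frac{3}{8}a_1^2 + 4q$; (c) $-9qa_1 - 4\sqrt{q}\,a_2 - 16q\sqrt{q} \leq a_3 \leq -9qa_1 + 4\sqrt{q}\,a_2 + 16q\sqrt{q}$; (d) $\frac12 a_1a_2 - \frac18 a_1^3 + qa_1 - \frac{1}{216}(9a_1^2 - 24a_2 + 96q)^{3/2} \leq a_3 \leq \frac12 a_1a_2 - \frac18 a_1^3 + qa_1 + \frac{1}{216}(9a_1^2 - 24a_2 + 96q)^{3/2}$; (e) $2\sqrt{q}\,|qa_1 + a_3| - 2qa_2 - 2q^2 \leq a_4$; where the quantity $9a_1^2-24a_2+96q$ in (d) is a non-negative real number by (b). Define the real numbers $u_2 = -\frac{3a_1^2}{16} + \frac{a_2}{2} - 2q$, $u_3 = -\frac{a_1^3}{32} + \frac{a_1a_2}{8} + \frac{a_1q}{4} - \frac{a_3}{4}$, $\Delta = u_3^2 + \frac{4u_2^3}{27}$, and the set $S = \left\{ -\zeta^k\omega\left(\frac{9u_3}{2} + \frac{3\sqrt{\Delta}}{2}\right) - \zeta^{-k}\bar\omega\left(\frac{9u_3}{2} - \frac{3\sqrt{\Delta}}{2}\right) + \frac{2u_2^2}{3}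 : 0 \leq k \leq 2\right\}$, where $\zeta$ is a primitive third root of unity, $\sqrt{\Delta}$ is a complex square root of $\Delta$, and $\omega$ is a complex third root of $\frac12(-u_3 + \sqrt{\Delta})$. If $h(x) \in W_q(4)$ or (a)–(d) hold, then $S$ consists of real numbers. Assuming this, sort the elements of $S$ as $\theta_1 \leq \theta_2 \leq \theta_3$ and consider (f) $\frac{3}{256}a_1^4 - \frac{1}{16}a_1^2a_2 - \frac12 qa_1^2 + \frac14 a_1a_3 + 2qa_2 - 2q^2 + \theta_1 \leq a_4 \leq \frac{3}{256}a_1^4 - \frac{1}{16}a_1^2a_2 - \frac12 qa_1^2 + \frac14 a_1a_3 + 2qa_2 - 2q^2 + \theta_2$. Then $h(x) \in W_q(4)$ if and only if (a)–(f) all hold. Moreover, $h(x) \in W_q(4)$ has a real root if and only if at least one of the inequalities in (a), (b* ), (c) or (e) is an equality. Explicitly, $h(x)$ lies in $W_q(4)$ and has a real root if and only if exactly one of the following (mutually exclusive) cases occurs: (I) $q$ is a square and $h(x) = (x+\sqrt{q})^2h_0(x)$ or $h(x) = (x-\sqrt{q})^2h_0(x)$ with $h_0(x) \in W_q(3)$; (II) $q$ is not a square and $h(x) = (x^2-q)^2h_0(x)$ with $h_0(x) \in W_q(2)$.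
   Context: A $q$-Weil polynomial is a monic polynomial in $\mathbb{Z}[x]$ of even positive degree $2g$ whose set of complex roots has the form $\{w_1,\bar w_1,\ldots,w_g,\bar w_g\}$ with $|w_i| = \sqrt{q}$ for every $i$. $W_q(g)$ denotes the set of $q$-Weil polynomials of degree $2g$. For a positive real $r$, $r^{1/n}$ and $\sqrt[n]{r}$ denote the positive real $n$-th root; in all other cases these symbols denote an arbitrary complex $n$-th root. *)

theory Defs
  imports "HOL-Analysis.Analysis" "HOL-Computational_Algebra.Polynomial"
begin

definition weil_poly :: "nat \<Rightarrow> nat \<Rightarrow> int poly \<Rightarrow> bool" where
  "weil_poly q g h \<longleftrightarrow> g > 0 \<and> degree h = 2 * g \<and> lead_coeff h = 1 \<and>
     (\<exists>ws :: complex list. length ws = g \<and> (\<forall>w\<in>set ws. cmod w = sqrt (real q)) \<and>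
        map_poly of_int h = (\<Prod>w\<leftarrow>ws. [:- w, 1:] * [:- cnj w, 1:]))"

definition W :: "nat \<Rightarrow> nat \<Rightarrow> int poly set" where
  "W q g = {h. weil_poly q g h}"

definition hpoly :: "nat \<Rightarrow> int \<Rightarrow> int \<Rightarrow> int \<Rightarrow> int \<Rightarrow> int poly" where
  "hpoly q a1 a2 a3 a4 =
     [: int q ^ 4, a1 * int q ^ 3, a2 * int q ^ 2, a3 * int q, a4, a3, a2, a1, 1 :]"

definition cond_a :: "nat \<Rightarrow> int \<Rightarrow> bool" where
  "cond_a q a1 \<longleftrightarrow> \<bar>real_of_int a1\<bar> \<le> 8 * sqrt q"

definition cond_bstar :: "nat \<Rightarrow> int \<Rightarrow> int \<Rightarrow> bool" where
  "cond_bstar q a1 a2 \<longleftrightarrow> 6 * sqrt q * \<bar>real_of_int a1\<bar> - 20 * real q \<le> real_of_int a2"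

definition cond_b :: "nat \<Rightarrow> int \<Rightarrow> int \<Rightarrow> bool" where
  "cond_b q a1 a2 \<longleftrightarrow> real_of_int a2 \<le> 3/8 * real_of_int a1 ^ 2 + 4 * real q"

definition cond_c :: "nat \<Rightarrow> int \<Rightarrow> int \<Rightarrow> int \<Rightarrow> bool" where
  "cond_c q a1 a2 a3 \<longleftrightarrow>
     - 9 * real q * a1 - 4 * sqrt q * a2 - 16 * real q * sqrt q \<le> real_of_int a3 \<and>
     real_of_int a3 \<le> - 9 * real q * a1 + 4 * sqrt q * a2 + 16 * real q * sqrt q"

definition cond_d :: "nat \<Rightarrow> int \<Rightarrow> int \<Rightarrow> int \<Rightarrow> bool" where
  "cond_d q a1 a2 a3 \<longleftrightarrow>
    (let m = 1/2 * real_of_int a1 * a2 - 1/8 * real_of_int a1 ^ 3 + real q * a1;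
         r = 1/216 * (9 * real_of_int a1 ^ 2 - 24 * a2 + 96 * real q) powr (3/2)
     in m - r \<le> real_of_int a3 \<and> real_of_int a3 \<le> m + r)"

definition cond_e :: "nat \<Rightarrow> int \<Rightarrow> int \<Rightarrow> int \<Rightarrow> int \<Rightarrow> bool" where
  "cond_e q a1 a2 a3 a4 \<longleftrightarrow>
     2 * sqrt q * \<bar>real q * a1 + a3\<bar> - 2 * real q * a2 - 2 * real q ^ 2 \<le> real_of_int a4"

definition u2 :: "nat \<Rightarrow> int \<Rightarrow> int \<Rightarrow> real" where
  "u2 q a1 a2 = - 3 * real_of_int a1 ^ 2 / 16 + real_of_int a2 / 2 - 2 * real q"

definition u3 :: "nat \<Rightarrow> int \<Rightarrow> int \<Rightarrow> int \<Rightarrow> real" where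
  "u3 q a1 a2 a3 = - (real_of_int a1 ^ 3) / 32 + real_of_int a1 * real_of_int a2 / 8
                    + real_of_int a1 * real q / 4 - real_of_int a3 / 4"

definition Disc :: "nat \<Rightarrow> int \<Rightarrow> int \<Rightarrow> int \<Rightarrow> real" where
  "Disc q a1 a2 a3 = u3 q a1 a2 a3 ^ 2 + 4 * u2 q a1 a2 ^ 3 / 27"

definition admissible :: "nat \<Rightarrow> int \<Rightarrow> int \<Rightarrow> int \<Rightarrow> complex \<Rightarrow> complex \<Rightarrow> complex \<Rightarrow> bool" where
  "admissible q a1 a2 a3 \<zeta> sD om \<longleftrightarrow>
     \<zeta> ^ 3 = 1 \<and> \<zeta> \<noteq> 1 \<and> sD ^ 2 = complex_of_real (Disc q a1 a2 a3) \<and>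
     om ^ 3 = (- complex_of_real (u3 q a1 a2 a3) + sD) / 2"

definition S_elem :: "nat \<Rightarrow> int \<Rightarrow> int \<Rightarrow> int \<Rightarrow> complex \<Rightarrow> complex \<Rightarrow> complex \<Rightarrow> nat \<Rightarrow> complex" where
  "S_elem q a1 a2 a3 \<zeta> sD om k =
     (let U2 = complex_of_real (u2 q a1 a2); U3 = complex_of_real (u3 q a1 a2 a3) in
      - (\<zeta> ^ k) * om * (9 * U3 / 2 + 3 * sD / 2)
      - (inverse \<zeta>) ^ k * cnj om * (9 * U3 / 2 - 3 * sD / 2) + 2 * U2 ^ 2 / 3)"

text \<open>Sorted real values theta_1 <= theta_2 <= theta_3 (as a list, index 0,1,2).\<close>
definition thetas :: "nat \<Rightarrow> int \<Rightarrow> int \<Rightarrow> int \<Rightarrow> complex \<Rightarrow> complex \<Rightarrow> complex \<Rightarrow> real list" where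
  "thetas q a1 a2 a3 \<zeta> sD om = sort (map (\<lambda>k. Re (S_elem q a1 a2 a3 \<zeta> sD om k)) [0, 1, 2])"

definition cond_f :: "nat \<Rightarrow> int \<Rightarrow> int \<Rightarrow> int \<Rightarrow> int \<Rightarrow> complex \<Rightarrow> complex \<Rightarrow> complex \<Rightarrow> bool" where
  "cond_f q a1 a2 a3 a4 \<zeta> sD om \<longleftrightarrow>
    (let c = 3/256 * real_of_int a1 ^ 4 - 1/16 * real_of_int a1 ^ 2 * a2 - 1/2 * real q * a1 ^ 2
             + 1/4 * real_of_int a1 * a3 + 2 * real q * a2 - 2 * real q ^ 2;
         th = thetas q a1 a2 a3 \<zeta> sD om
     in c + th ! 0 \<le> real_of_int a4 \<and> real_of_int a4 \<le> c + th ! 1)"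

end

(*
  Write h(x) = x^4 G(x + q/x) with a real monic quartic G. The roots of G are the traces
  w + cnj w of the roots of h, so h is a q-Weil polynomial iff G has four real roots in
  [-2 sqrt q, 2 sqrt q].

  Real-rootedness of a quartic is decided by its values at the three critical points, the
  roots of G': these must be real (Delta <= 0, equivalently (d) under (b)), and G must be
  nonpositive, nonnegative, nonpositive at them, in increasing order. Cardano's formula gives
  the critical points, and S consists of the numbers G(-a1/4) - G(r) for the critical points
  r, so this sign condition is (f). For a real-rooted G, all roots lie in [-p, p] iff the
  Taylor coefficients of G at p are nonnegative and those at -p alternate in sign; at
  p = 2 sqrt q these are the inequalities (a), b*, (c) and (e), and a real root of h at
  +-sqrt q corresponds to one of them being an equality.

  A real root x of h satisfies x^2 = q and occurs with even multiplicity; if q is not a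
  square, -x is a root as well, since h has integer coefficients.
*)
theory Submission
  imports Defs
begin

section \<open>Real quartics\<close>

definition quartic :: "real \<Rightarrow> real \<Rightarrow> real \<Rightarrow> real \<Rightarrow> real \<Rightarrow> real" where
  "quartic b1 b2 b3 b4 x = x^4 + b1 * x^3 + b2 * x^2 + b3 * x + b4"

definition quartic_deriv :: "real \<Rightarrow> real \<Rightarrow> real \<Rightarrow> real \<Rightarrow> real" where
  "quartic_deriv b1 b2 b3 x = 4 * x^3 + 3 * b1 * x^2 + 2 * b2 * x + b3"

definition quartic_deriv2 :: "real \<Rightarrow> real \<Rightarrow> real \<Rightarrow> real" where
  "quartic_deriv2 b1 b2 x = 12 * x^2 + 6 * b1 * x + 2 * b2"

definition quartic_deriv3 :: "real \<Rightarrow> real \<Rightarrow> real" where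
  "quartic_deriv3 b1 x = 24 * x + 6 * b1"

definition quartic_roots ::
    "real \<Rightarrow> real \<Rightarrow> real \<Rightarrow> real \<Rightarrow> real \<Rightarrow> real \<Rightarrow> real \<Rightarrow> real \<Rightarrow> bool" where
  "quartic_roots b1 b2 b3 b4 t1 t2 t3 t4 \<longleftrightarrow>
     (\<forall>x. quartic b1 b2 b3 b4 x = (x - t1) * (x - t2) * (x - t3) * (x - t4))"

definition deriv_roots :: "real \<Rightarrow> real \<Rightarrow> real \<Rightarrow> real \<Rightarrow> real \<Rightarrow> real \<Rightarrow> bool" where
  "deriv_roots b1 b2 b3 r0 r1 r2 \<longleftrightarrow>
     (\<forall>x. quartic_deriv b1 b2 b3 x = 4 * ((x - r0) * (x - r1) * (x - r2)))"

lemma quartic_roots_iff_vieta: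
  "quartic_roots b1 b2 b3 b4 t1 t2 t3 t4 \<longleftrightarrow>
     b1 = - (t1 + t2 + t3 + t4) \<and>
     b2 = t1 * t2 + t1 * t3 + t1 * t4 + t2 * t3 + t2 * t4 + t3 * t4 \<and>
     b3 = - (t1 * t2 * t3 + t1 * t2 * t4 + t1 * t3 * t4 + t2 * t3 * t4) \<and>
     b4 = t1 * t2 * t3 * t4"
  (is "?roots \<longleftrightarrow> ?vieta")
proof
  assume ?roots
  then have "quartic b1 b2 b3 b4 x = (x - t1) * (x - t2) * (x - t3) * (x - t4)" for x
    by (simp add: quartic_roots_def)
  from this[of 0] this[of 1] this[of "-1"] this[of 2] this[of "-2"] show ?vieta
    unfolding quartic_def by simp algebra
next
  assume ?vieta
  then show ?roots
    unfolding quartic_roots_def quartic_def by (elim conjE) (intro allI, algebra)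
qed

lemma deriv_roots_iff_vieta:
  "deriv_roots b1 b2 b3 r0 r1 r2 \<longleftrightarrow>
     3 * b1 = - 4 * (r0 + r1 + r2) \<and> b2 = 2 * (r0 * r1 + r0 * r2 + r1 * r2) \<and>
     b3 = - 4 * (r0 * r1 * r2)"
  (is "?roots \<longleftrightarrow> ?vieta")
proof
  assume ?roots
  then have "quartic_deriv b1 b2 b3 x = 4 * ((x - r0) * (x - r1) * (x - r2))" for x
    by (simp add: deriv_roots_def)
  from this[of 0] this[of 1] this[of "-1"] this[of 2] show ?vieta
    unfolding quartic_deriv_def by simp algebra
next
  assume ?vieta
  then show ?roots
    unfolding deriv_roots_def quartic_deriv_def by (elim conjE) (intro allI, algebra)
qed

lemma quartic_roots_eval:
  "quartic_roots b1 b2 b3 b4 t1 t2 t3 t4 \<Longrightarrow>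
     quartic b1 b2 b3 b4 x = (x - t1) * (x - t2) * (x - t3) * (x - t4)"
  by (simp add: quartic_roots_def)

lemma quartic_roots_deriv:
  "quartic_roots b1 b2 b3 b4 t1 t2 t3 t4 \<Longrightarrow> quartic_deriv b1 b2 b3 x =
     (x - t2) * (x - t3) * (x - t4) + (x - t1) * (x - t3) * (x - t4)
     + (x - t1) * (x - t2) * (x - t4) + (x - t1) * (x - t2) * (x - t3)"
  unfolding quartic_roots_iff_vieta quartic_deriv_def by (elim conjE) algebra

lemma quartic_roots_deriv2:
  "quartic_roots b1 b2 b3 b4 t1 t2 t3 t4 \<Longrightarrow> quartic_deriv2 b1 b2 x =
     2 * ((x - t3) * (x - t4) + (x - t2) * (x - t4) + (x - t2) * (x - t3)
          + (x - t1) * (x - t4) + (x - t1) * (x - t3) + (x - t1) * (x - t2))"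
  unfolding quartic_roots_iff_vieta quartic_deriv2_def by (elim conjE) algebra

lemma quartic_roots_deriv3:
  "quartic_roots b1 b2 b3 b4 t1 t2 t3 t4 \<Longrightarrow>
     quartic_deriv3 b1 x = 6 * ((x - t1) + (x - t2) + (x - t3) + (x - t4))"
  unfolding quartic_roots_iff_vieta quartic_deriv3_def by simp

lemma deriv_roots_eval:
  "deriv_roots b1 b2 b3 r0 r1 r2 \<Longrightarrow> quartic_deriv b1 b2 b3 x = 4 * ((x - r0) * (x - r1) * (x - r2))"
  by (simp add: deriv_roots_def)

lemma deriv_roots_deriv2:
  "deriv_roots b1 b2 b3 r0 r1 r2 \<Longrightarrow>
     quartic_deriv2 b1 b2 x = 4 * ((x - r1) * (x - r2) + (x - r0) * (x - r2) + (x - r0) * (x - r1))"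
  unfolding deriv_roots_iff_vieta quartic_deriv2_def by (elim conjE) algebra

lemma deriv_roots_swap12: "deriv_roots b1 b2 b3 r0 r1 r2 \<Longrightarrow> deriv_roots b1 b2 b3 r1 r0 r2"
  by (simp add: deriv_roots_def ac_simps)

lemma deriv_roots_swap23: "deriv_roots b1 b2 b3 r0 r1 r2 \<Longrightarrow> deriv_roots b1 b2 b3 r0 r2 r1"
  by (simp add: deriv_roots_def ac_simps)

lemma quartic_taylor:
  "quartic b1 b2 b3 b4 (p + x) = x^4 + quartic_deriv3 b1 p / 6 * x^3 + quartic_deriv2 b1 b2 p / 2 * x^2
     + quartic_deriv b1 b2 b3 p * x + quartic b1 b2 b3 b4 p"
  unfolding quartic_def quartic_deriv_def quartic_deriv2_def quartic_deriv3_def by algebra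

lemma quartic_reflect: "quartic (- b1) b2 (- b3) b4 x = quartic b1 b2 b3 b4 (- x)"
  by (simp add: quartic_def)

lemma quartic_roots_reflect:
  "quartic_roots b1 b2 b3 b4 t1 t2 t3 t4 \<Longrightarrow> quartic_roots (- b1) b2 (- b3) b4 (- t1) (- t2) (- t3) (- t4)"
  by (simp add: quartic_roots_iff_vieta)

lemma quartic_roots_sorted:
  assumes "quartic_roots b1 b2 b3 b4 t1 t2 t3 t4"
  obtains s1 s2 s3 s4 where "s1 \<le> s2" "s2 \<le> s3" "s3 \<le> s4" "quartic_roots b1 b2 b3 b4 s1 s2 s3 s4"
proof -
  define ss where "ss = sort [t1, t2, t3, t4]"
  have "length ss = 4" unfolding ss_def by simp
  then obtain s1 s2 s3 s4 where ss: "ss = [s1, s2, s3, s4]"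
    by (auto simp: length_Suc_conv numeral_eq_Suc)
  have "sorted ss" unfolding ss_def by simp
  then have le: "s1 \<le> s2" "s2 \<le> s3" "s3 \<le> s4" unfolding ss by auto
  have m: "mset ss = mset [t1, t2, t3, t4]" unfolding ss_def by simp
  have "quartic_roots b1 b2 b3 b4 s1 s2 s3 s4"
    unfolding quartic_roots_def
  proof
    fix x
    have "(\<Prod>t\<leftarrow>ss. x - t) = (\<Prod>t\<leftarrow>[t1, t2, t3, t4]. x - t)"
      by (metis m mset_map prod_mset_prod_list)
    then show "quartic b1 b2 b3 b4 x = (x - s1) * (x - s2) * (x - s3) * (x - s4)"
      using quartic_roots_eval[OF assms] unfolding ss by (simp add: mult.assoc)
  qed
  with le that show thesis by blast
qed

lemma isCont_quartic: "isCont (quartic b1 b2 b3 b4) x"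
  unfolding quartic_def by (intro continuous_intros)

lemma isCont_quartic_deriv: "isCont (quartic_deriv b1 b2 b3) x"
  unfolding quartic_deriv_def by (intro continuous_intros)

lemma monic_quadratic_splits:
  fixes \<beta> \<gamma> u :: real
  assumes "u^2 + \<beta> * u + \<gamma> \<le> 0"
  obtains p1 p2 where "\<And>x. x^2 + \<beta> * x + \<gamma> = (x - p1) * (x - p2)"
proof -
  have "\<beta>^2 - 4 * \<gamma> = (2 * u + \<beta>)^2 - 4 * (u^2 + \<beta> * u + \<gamma>)" by algebra
  then have disc: "\<beta>^2 - 4 * \<gamma> \<ge> 0" using assms by (smt (verit) zero_le_power2)
  define d where "d = sqrt (\<beta>^2 - 4 * \<gamma>)"
  have "d^2 = \<beta>^2 - 4 * \<gamma>" using disc by (simp add: d_def)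
  then have "x^2 + \<beta> * x + \<gamma> = (x - (- \<beta> + d) / 2) * (x - (- \<beta> - d) / 2)" for x
    by (simp add: field_simps power2_eq_square)
  then show thesis by (rule that)
qed

lemma quartic_synthetic_division:
  "quartic b1 b2 b3 b4 x = (x - a) * (x^3 + (b1 + a) * x^2 + (b2 + a * (b1 + a)) * x
     + (b3 + a * (b2 + a * (b1 + a)))) + quartic b1 b2 b3 b4 a"
  unfolding quartic_def by algebra

lemma cubic_synthetic_division:
  fixes c2 c1 c0 a x :: real
  shows "x^3 + c2 * x^2 + c1 * x + c0 = (x - a) * (x^2 + (c2 + a) * x + (c1 + a * (c2 + a)))
     + (a^3 + c2 * a^2 + c1 * a + c0)"
  by algebra

section \<open>The critical points of a real-rooted quartic\<close>

lemma quartic_deriv_at_sorted_roots: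
  assumes roots: "quartic_roots b1 b2 b3 b4 t1 t2 t3 t4" and le: "t1 \<le> t2" "t2 \<le> t3" "t3 \<le> t4"
  shows "quartic_deriv b1 b2 b3 t2 \<ge> 0" "quartic_deriv b1 b2 b3 t3 \<le> 0"
proof -
  note G' = quartic_roots_deriv[OF roots]
  have "quartic_deriv b1 b2 b3 t2 = (t2 - t1) * ((t2 - t3) * (t2 - t4))" by (simp add: G')
  also have "\<dots> \<ge> 0" using le by (intro mult_nonneg_nonneg mult_nonpos_nonpos) auto
  finally show "quartic_deriv b1 b2 b3 t2 \<ge> 0" .
  have "quartic_deriv b1 b2 b3 t3 = ((t3 - t1) * (t3 - t2)) * (t3 - t4)" by (simp add: G')
  also have "\<dots> \<le> 0" using le by (intro mult_nonneg_nonpos mult_nonneg_nonneg) auto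
  finally show "quartic_deriv b1 b2 b3 t3 \<le> 0" .
qed

lemma quartic_deriv2_at_middle_double_root:
  assumes roots: "quartic_roots b1 b2 b3 b4 t1 t2 t3 t4" and le: "t1 \<le> t2" "t2 \<le> t3" "t3 \<le> t4"
    and "t2 = t3"
  shows "quartic_deriv2 b1 b2 t2 \<le> 0"
proof -
  have "quartic_deriv2 b1 b2 t2 = 2 * ((t2 - t1) * (t2 - t4))"
    using quartic_roots_deriv2[OF roots, of t2] \<open>t2 = t3\<close> by simp
  also have "\<dots> \<le> 0" using le by (simp add: mult_nonneg_nonpos)
  finally show ?thesis .
qed

lemma quartic_deriv_divide_root:
  assumes "quartic_deriv b1 b2 b3 r = 0"
  obtains \<beta> \<gamma> where "\<And>x. quartic_deriv b1 b2 b3 x = 4 * (x - r) * (x^2 + \<beta> * x + \<gamma>)"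
    and "quartic_deriv2 b1 b2 r = 4 * (r^2 + \<beta> * r + \<gamma>)"
proof -
  define \<beta> where "\<beta> = 3 * b1 / 4 + r"
  define \<gamma> where "\<gamma> = b2 / 2 + r * \<beta>"
  have "quartic_deriv b1 b2 b3 x = 4 * (x - r) * (x^2 + \<beta> * x + \<gamma>) + quartic_deriv b1 b2 b3 r" for x
    unfolding quartic_deriv_def \<beta>_def \<gamma>_def by (simp add: field_simps power2_eq_square power3_eq_cube)
  then have "quartic_deriv b1 b2 b3 x = 4 * (x - r) * (x^2 + \<beta> * x + \<gamma>)" for x
    using assms by simp
  moreover have "quartic_deriv2 b1 b2 r = 4 * (r^2 + \<beta> * r + \<gamma>)"
    unfolding quartic_deriv2_def \<beta>_def \<gamma>_def by (simp add: field_simps power2_eq_square)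
  ultimately show thesis by (rule that)
qed

text \<open>A Rolle-type argument that respects multiplicities: G' vanishes at some r in [t2, t3],
  and the quadratic quotient G'/(x - r) is nonpositive at t2, at t3, or (when t2 = r = t3) at
  r, so it splits as well.\<close>

lemma quartic_roots_imp_deriv_roots:
  assumes "quartic_roots b1 b2 b3 b4 t1 t2 t3 t4"
  obtains r0 r1 r2 where "deriv_roots b1 b2 b3 r0 r1 r2"
proof -
  obtain s1 s2 s3 s4 where le: "s1 \<le> s2" "s2 \<le> s3" "s3 \<le> s4"
    and roots: "quartic_roots b1 b2 b3 b4 s1 s2 s3 s4"
    using quartic_roots_sorted[OF assms] by metis
  note signs = quartic_deriv_at_sorted_roots[OF roots le]
  obtain r where r: "s2 \<le> r" "r \<le> s3" "quartic_deriv b1 b2 b3 r = 0"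
    using IVT2[of "quartic_deriv b1 b2 b3" s3 0 s2] signs le isCont_quartic_deriv by blast
  obtain \<beta> \<gamma> where factor: "\<And>x. quartic_deriv b1 b2 b3 x = 4 * (x - r) * (x^2 + \<beta> * x + \<gamma>)"
    and deriv2: "quartic_deriv2 b1 b2 r = 4 * (r^2 + \<beta> * r + \<gamma>)"
    using quartic_deriv_divide_root[OF r(3)] by metis
  have "\<exists>u. u^2 + \<beta> * u + \<gamma> \<le> 0"
  proof -
    consider "s2 < r" | "r < s3" | "s2 = r" "s3 = r" using r by linarith
    then show ?thesis
    proof cases
      case 1
      then have "s2^2 + \<beta> * s2 + \<gamma> \<le> 0" using signs(1) factor[of s2] by (simp add: zero_le_mult_iff)
      then show ?thesis by blast
    next
      case 2
      then have "s3^2 + \<beta> * s3 + \<gamma> \<le> 0" using signs(2) factor[of s3] by (simp add: mult_le_0_iff)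
      then show ?thesis by blast
    next
      case 3
      then have "r^2 + \<beta> * r + \<gamma> \<le> 0"
        using quartic_deriv2_at_middle_double_root[OF roots le] deriv2 by simp
      then show ?thesis by blast
    qed
  qed
  then obtain u where "u^2 + \<beta> * u + \<gamma> \<le> 0" by blast
  then obtain p1 p2 where "\<And>x. x^2 + \<beta> * x + \<gamma> = (x - p1) * (x - p2)"
    using monic_quadratic_splits by metis
  then have "deriv_roots b1 b2 b3 r p1 p2" by (simp add: deriv_roots_def factor)
  then show thesis by (rule that)
qed

text \<open>The derivative in depressed form is G'(y - b1/4) = 4 (y^3 + u2 y - u3), and
  deriv_disc is its discriminant divided by -27.\<close>

definition deriv_u2 :: "real \<Rightarrow> real \<Rightarrow> real" where
  "deriv_u2 b1 b2 = b2 / 2 - 3 * b1^2 / 16"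

definition deriv_u3 :: "real \<Rightarrow> real \<Rightarrow> real \<Rightarrow> real" where
  "deriv_u3 b1 b2 b3 = b1 * b2 / 8 - b1^3 / 32 - b3 / 4"

definition deriv_disc :: "real \<Rightarrow> real \<Rightarrow> real \<Rightarrow> real" where
  "deriv_disc b1 b2 b3 = deriv_u3 b1 b2 b3 ^ 2 + 4 * deriv_u2 b1 b2 ^ 3 / 27"

lemma quartic_depressed:
  "quartic b1 b2 b3 b4 (y - b1 / 4) = y^4 + 2 * deriv_u2 b1 b2 * y^2 - 4 * deriv_u3 b1 b2 b3 * y
     + quartic b1 b2 b3 b4 (- b1 / 4)"
  unfolding quartic_def deriv_u2_def deriv_u3_def
  by (simp add: field_simps power2_eq_square power3_eq_cube power4_eq_xxxx)

lemma deriv_roots_disc: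
  assumes "deriv_roots b1 b2 b3 r0 r1 r2"
  shows "deriv_disc b1 b2 b3 = - (((r0 - r1) * (r0 - r2) * (r1 - r2))^2) / 27"
proof -
  have b: "b1 = - 4 / 3 * (r0 + r1 + r2)" "b2 = 2 * (r0 * r1 + r0 * r2 + r1 * r2)"
    "b3 = - 4 * (r0 * r1 * r2)"
    using assms unfolding deriv_roots_iff_vieta by linarith+
  show ?thesis
    unfolding deriv_disc_def deriv_u2_def deriv_u3_def b
    by (simp add: field_simps power2_eq_square power3_eq_cube)
qed

lemma quartic_roots_deriv_disc_nonpos:
  assumes "quartic_roots b1 b2 b3 b4 t1 t2 t3 t4"
  shows "deriv_disc b1 b2 b3 \<le> 0"
  using quartic_roots_imp_deriv_roots[OF assms] deriv_roots_disc by fastforce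

lemma quartic_deriv_outside_roots:
  assumes roots: "quartic_roots b1 b2 b3 b4 t1 t2 t3 t4" and le: "t1 \<le> t2" "t2 \<le> t3" "t3 \<le> t4"
  shows "x < t1 \<Longrightarrow> quartic_deriv b1 b2 b3 x < 0" and "t4 < x \<Longrightarrow> quartic_deriv b1 b2 b3 x > 0"
proof -
  note G' = quartic_roots_deriv[OF roots]
  assume "x < t1"
  then have pos: "t1 - x > 0" "t2 - x > 0" "t3 - x > 0" "t4 - x > 0" using le by auto
  have "quartic_deriv b1 b2 b3 x = - ((t2 - x) * (t3 - x) * (t4 - x) + (t1 - x) * (t3 - x) * (t4 - x)
      + (t1 - x) * (t2 - x) * (t4 - x) + (t1 - x) * (t2 - x) * (t3 - x))"
    unfolding G' by algebra
  moreover have "0 < (t2 - x) * (t3 - x) * (t4 - x) + (t1 - x) * (t3 - x) * (t4 - x)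
      + (t1 - x) * (t2 - x) * (t4 - x) + (t1 - x) * (t2 - x) * (t3 - x)"
    using pos by (intro add_pos_pos mult_pos_pos)
  ultimately show "quartic_deriv b1 b2 b3 x < 0" by linarith
next
  note G' = quartic_roots_deriv[OF roots]
  assume "t4 < x"
  then have "x - t1 > 0" "x - t2 > 0" "x - t3 > 0" "x - t4 > 0" using le by auto
  then show "quartic_deriv b1 b2 b3 x > 0" unfolding G' by (simp add: add_pos_pos)
qed

lemma deriv_roots_interlace_outer:
  assumes roots: "quartic_roots b1 b2 b3 b4 t1 t2 t3 t4" and le: "t1 \<le> t2" "t2 \<le> t3" "t3 \<le> t4"
    and dr: "deriv_roots b1 b2 b3 r0 r1 r2" and r: "r0 \<le> r1" "r1 \<le> r2"
  shows "t1 \<le> r0" "r0 \<le> t2" "t3 \<le> r2" "r2 \<le> t4"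
proof -
  note signs = quartic_deriv_at_sorted_roots[OF roots le]
  note G' = deriv_roots_eval[OF dr]
  show "t1 \<le> r0" using quartic_deriv_outside_roots(1)[OF roots le, of r0] by (force simp: G')
  show "r2 \<le> t4" using quartic_deriv_outside_roots(2)[OF roots le, of r2] by (force simp: G')
  show "r0 \<le> t2"
  proof (rule ccontr)
    assume "\<not> r0 \<le> t2"
    then have "0 < (r0 - t2) * (r1 - t2) * (r2 - t2)" using r by simp
    with signs(1) show False by (simp add: G' algebra_simps)
  qed
  show "t3 \<le> r2"
  proof (rule ccontr)
    assume "\<not> t3 \<le> r2"
    then have "0 < (t3 - r0) * (t3 - r1) * (t3 - r2)" using r by simp
    with signs(2) show False by (simp add: G')
  qed
qed

text \<open>If r1 lay outside [t2, t3], the signs of the derivative at t2 and t3 would force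
  t2 = t3 to be a double root at which the second derivative is positive.\<close>

lemma deriv_roots_interlace_middle:
  assumes roots: "quartic_roots b1 b2 b3 b4 t1 t2 t3 t4" and le: "t1 \<le> t2" "t2 \<le> t3" "t3 \<le> t4"
    and dr: "deriv_roots b1 b2 b3 r0 r1 r2" and r: "r0 \<le> r1" "r1 \<le> r2"
  shows "t2 \<le> r1" "r1 \<le> t3"
proof -
  note signs = quartic_deriv_at_sorted_roots[OF roots le]
  note G' = deriv_roots_eval[OF dr] and G'' = deriv_roots_deriv2[OF dr]
  note double = quartic_deriv2_at_middle_double_root[OF roots le]
  show "t2 \<le> r1"
  proof (rule ccontr)
    assume "\<not> t2 \<le> r1"
    then have p2: "0 < (t2 - r0) * (t2 - r1)" and p3: "0 < (t3 - r0) * (t3 - r1)"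
      using r le by simp_all
    have "0 \<le> (t2 - r0) * (t2 - r1) * (t2 - r2)" using signs(1) by (simp add: G')
    then have "r2 \<le> t2" using p2 by (simp add: zero_le_mult_iff)
    moreover have "(t3 - r0) * (t3 - r1) * (t3 - r2) \<le> 0" using signs(2) by (simp add: G')
    then have "t3 \<le> r2" using p3 mult_le_0_iff[of "(t3 - r0) * (t3 - r1)" "t3 - r2"] by auto
    ultimately have "t2 = t3" "t2 = r2" using le by auto
    then have "quartic_deriv2 b1 b2 t2 = 4 * ((t2 - r0) * (t2 - r1))" by (simp add: G'')
    with p2 double[OF \<open>t2 = t3\<close>] show False by simp
  qed
  show "r1 \<le> t3"
  proof (rule ccontr)
    assume "\<not> r1 \<le> t3"
    then have p2: "0 < (t2 - r1) * (t2 - r2)" and p3: "0 < (t3 - r1) * (t3 - r2)"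
      using r le by (simp_all add: mult_neg_neg)
    have "0 \<le> (t2 - r0) * ((t2 - r1) * (t2 - r2))" using signs(1) by (simp add: G' mult.assoc)
    then have "r0 \<le> t2" using p2 by (simp add: zero_le_mult_iff)
    moreover have "(t3 - r0) * ((t3 - r1) * (t3 - r2)) \<le> 0" using signs(2) by (simp add: G' mult.assoc)
    then have "t3 \<le> r0" using p3 mult_le_0_iff[of "t3 - r0" "(t3 - r1) * (t3 - r2)"] by auto
    ultimately have "t2 = t3" "t2 = r0" using le by auto
    then have "quartic_deriv2 b1 b2 t2 = 4 * ((t2 - r1) * (t2 - r2))" by (simp add: G'')
    with p2 double[OF \<open>t2 = t3\<close>] show False by simp
  qed
qed

lemma quartic_at_sorted_deriv_roots:
  assumes roots: "quartic_roots b1 b2 b3 b4 t1 t2 t3 t4" and le: "t1 \<le> t2" "t2 \<le> t3" "t3 \<le> t4"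
    and dr: "deriv_roots b1 b2 b3 r0 r1 r2" and r: "r0 \<le> r1" "r1 \<le> r2"
  shows "quartic b1 b2 b3 b4 r0 \<le> 0" "quartic b1 b2 b3 b4 r1 \<ge> 0" "quartic b1 b2 b3 b4 r2 \<le> 0"
proof -
  note il = deriv_roots_interlace_outer[OF roots le dr r] deriv_roots_interlace_middle[OF roots le dr r]
  note G = quartic_roots_eval[OF roots]
  have "quartic b1 b2 b3 b4 r0 = ((r0 - t1) * ((r0 - t2) * (r0 - t3))) * (r0 - t4)" by (simp add: G)
  also have "\<dots> \<le> 0" using il le r
    by (intro mult_nonneg_nonpos mult_nonneg_nonneg mult_nonpos_nonpos) auto
  finally show "quartic b1 b2 b3 b4 r0 \<le> 0" .
  have "quartic b1 b2 b3 b4 r1 = ((r1 - t1) * (r1 - t2)) * ((r1 - t3) * (r1 - t4))" by (simp add: G)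
  also have "\<dots> \<ge> 0" using il le r by (intro mult_nonneg_nonneg mult_nonpos_nonpos) auto
  finally show "quartic b1 b2 b3 b4 r1 \<ge> 0" .
  have "quartic b1 b2 b3 b4 r2 = ((r2 - t1) * (r2 - t2) * (r2 - t3)) * (r2 - t4)" by (simp add: G)
  also have "\<dots> \<le> 0" using il le r by (intro mult_nonneg_nonpos mult_nonneg_nonneg) auto
  finally show "quartic b1 b2 b3 b4 r2 \<le> 0" .
qed

section \<open>Real-rootedness from the critical values\<close>

lemma quartic_roots_at_double_root:
  assumes root: "quartic b1 b2 b3 b4 r = 0" "quartic_deriv b1 b2 b3 r = 0"
    and nonpos: "quartic_deriv2 b1 b2 r \<le> 0 \<or> (\<exists>u. u \<noteq> r \<and> quartic b1 b2 b3 b4 u \<le> 0)"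
  obtains t3 t4 where "quartic_roots b1 b2 b3 b4 r r t3 t4"
proof -
  define \<beta> where "\<beta> = quartic_deriv3 b1 r / 6"
  define \<gamma> where "\<gamma> = quartic_deriv2 b1 b2 r / 2"
  have shifted: "quartic b1 b2 b3 b4 (r + x) = x^2 * (x^2 + \<beta> * x + \<gamma>)" for x
    using quartic_taylor[of b1 b2 b3 b4 r x] root unfolding \<beta>_def \<gamma>_def
    by (simp add: algebra_simps power2_eq_square power3_eq_cube power4_eq_xxxx)
  have "\<exists>v. v^2 + \<beta> * v + \<gamma> \<le> 0"
  proof (cases "quartic_deriv2 b1 b2 r \<le> 0")
    case True
    then show ?thesis by (intro exI[of _ 0]) (simp add: \<gamma>_def)
  next
    case False
    with nonpos obtain u where "u \<noteq> r" "quartic b1 b2 b3 b4 u \<le> 0" by blast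
    moreover have "quartic b1 b2 b3 b4 u = (u - r)^2 * ((u - r)^2 + \<beta> * (u - r) + \<gamma>)"
      using shifted[of "u - r"] by simp
    ultimately have "(u - r)^2 + \<beta> * (u - r) + \<gamma> \<le> 0" by (simp add: mult_le_0_iff)
    then show ?thesis by blast
  qed
  then obtain v where "v^2 + \<beta> * v + \<gamma> \<le> 0" by blast
  then obtain p1 p2 where split: "\<And>x. x^2 + \<beta> * x + \<gamma> = (x - p1) * (x - p2)"
    using monic_quadratic_splits by metis
  have "quartic_roots b1 b2 b3 b4 r r (r + p1) (r + p2)"
    unfolding quartic_roots_def
  proof
    fix x
    have "quartic b1 b2 b3 b4 x = (x - r)^2 * ((x - r)^2 + \<beta> * (x - r) + \<gamma>)"
      using shifted[of "x - r"] by simp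
    then show "quartic b1 b2 b3 b4 x = (x - r) * (x - r) * (x - (r + p1)) * (x - (r + p2))"
      unfolding split by (simp add: power2_eq_square algebra_simps)
  qed
  then show thesis by (rule that)
qed

lemma quartic_pos_left_of_crit:
  assumes dr: "deriv_roots b1 b2 b3 r0 r1 r2" and r: "r0 \<le> r1" "r1 \<le> r2"
  obtains x where "x \<le> r0" "quartic b1 b2 b3 b4 x > 0"
proof -
  define R where "R = max 1 (1 - quartic b1 b2 b3 b4 r0)"
  have "3 * b1 = - 4 * (r0 + r1 + r2)" using dr by (simp add: deriv_roots_iff_vieta)
  then have d3: "quartic_deriv3 b1 r0 = - 8 * ((r1 - r0) + (r2 - r0))"
    unfolding quartic_deriv3_def by algebra
  have d2: "quartic_deriv2 b1 b2 r0 = 4 * ((r1 - r0) * (r2 - r0))"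
    by (simp add: deriv_roots_deriv2[OF dr] algebra_simps)
  have d1: "quartic_deriv b1 b2 b3 r0 = 0" by (simp add: deriv_roots_eval[OF dr])
  have "quartic b1 b2 b3 b4 (r0 - R)
      = R^4 + (4 / 3 * ((r1 - r0) + (r2 - r0)) * R^3 + 2 * ((r1 - r0) * (r2 - r0)) * R^2)
        + quartic b1 b2 b3 b4 r0"
    using quartic_taylor[of b1 b2 b3 b4 r0 "- R"] unfolding d3 d2 d1 by (simp add: field_simps)
  moreover have R: "1 \<le> R" "1 - quartic b1 b2 b3 b4 r0 \<le> R" by (simp_all add: R_def)
  moreover have "4 / 3 * ((r1 - r0) + (r2 - r0)) * R^3 + 2 * ((r1 - r0) * (r2 - r0)) * R^2 \<ge> 0"
    using r R by (intro add_nonneg_nonneg mult_nonneg_nonneg) auto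
  moreover have "R \<le> R^4" using power_increasing[of 1 4 R] R by simp
  ultimately have "quartic b1 b2 b3 b4 (r0 - R) > 0" by linarith
  moreover have "r0 - R \<le> r0" using R by simp
  ultimately show thesis using that by blast
qed

lemma quartic_roots_of_strict_crit_signs:
  assumes dr: "deriv_roots b1 b2 b3 r0 r1 r2" and r: "r0 \<le> r1" "r1 \<le> r2"
    and signs: "quartic b1 b2 b3 b4 r0 < 0" "quartic b1 b2 b3 b4 r1 > 0" "quartic b1 b2 b3 b4 r2 < 0"
  obtains t1 t2 t3 t4 where "quartic_roots b1 b2 b3 b4 t1 t2 t3 t4"
proof -
  obtain x where "x \<le> r0" "quartic b1 b2 b3 b4 x > 0" using quartic_pos_left_of_crit[OF dr r] .
  then obtain xa where xa: "xa \<le> r0" "quartic b1 b2 b3 b4 xa = 0"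
    using IVT2[of "quartic b1 b2 b3 b4" r0 0 x] signs(1) isCont_quartic by force
  obtain xb where xb: "r0 \<le> xb" "xb \<le> r1" "quartic b1 b2 b3 b4 xb = 0"
    using IVT[of "quartic b1 b2 b3 b4" r0 0 r1] signs(1,2) r isCont_quartic by force
  have strict: "xa < r0" "r0 < xb" "xb < r1" using xa xb signs by (auto simp: le_less)
  define c2 where "c2 = b1 + xa"
  define c1 where "c1 = b2 + xa * c2"
  define c0 where "c0 = b3 + xa * c1"
  define q1 where "q1 = c2 + xb"
  define q0 where "q0 = c1 + xb * q1"
  have cubic: "quartic b1 b2 b3 b4 x = (x - xa) * (x^3 + c2 * x^2 + c1 * x + c0)" for x
    using quartic_synthetic_division[of b1 b2 b3 b4 x xa] xa by (simp add: c2_def c1_def c0_def)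
  have "(xb - xa) * (xb^3 + c2 * xb^2 + c1 * xb + c0) = 0" using cubic[of xb] xb by simp
  then have "xb^3 + c2 * xb^2 + c1 * xb + c0 = 0" using strict by simp
  then have factor: "quartic b1 b2 b3 b4 x = (x - xa) * (x - xb) * (x^2 + q1 * x + q0)" for x
    using cubic[of x] cubic_synthetic_division[of x c2 c1 c0 xb] by (simp add: q1_def q0_def)
  have "(r2 - xa) * (r2 - xb) > 0" using strict r by simp
  moreover have "(r2 - xa) * (r2 - xb) * (r2^2 + q1 * r2 + q0) < 0" using factor[of r2] signs(3) by simp
  ultimately have "r2^2 + q1 * r2 + q0 \<le> 0"
    using mult_less_0_iff[of "(r2 - xa) * (r2 - xb)" "r2^2 + q1 * r2 + q0"] by auto
  then obtain p1 p2 where split: "\<And>x. x^2 + q1 * x + q0 = (x - p1) * (x - p2)"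
    using monic_quadratic_splits by metis
  have "quartic_roots b1 b2 b3 b4 xa xb p1 p2"
    unfolding quartic_roots_def factor split by (simp add: mult.assoc)
  then show thesis by (rule that)
qed

lemma quartic_roots_of_deriv_root_signs:
  assumes dr: "deriv_roots b1 b2 b3 r0 r1 r2" and r: "r0 \<le> r1" "r1 \<le> r2"
    and signs: "quartic b1 b2 b3 b4 r0 \<le> 0" "quartic b1 b2 b3 b4 r1 \<ge> 0" "quartic b1 b2 b3 b4 r2 \<le> 0"
  obtains t1 t2 t3 t4 where "quartic_roots b1 b2 b3 b4 t1 t2 t3 t4"
proof (cases "quartic b1 b2 b3 b4 r0 = 0 \<or> quartic b1 b2 b3 b4 r1 = 0 \<or> quartic b1 b2 b3 b4 r2 = 0")
  case True
  then obtain r where rr: "r \<in> {r0, r1, r2}" and "quartic b1 b2 b3 b4 r = 0" by blast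
  moreover have "quartic_deriv b1 b2 b3 r = 0" using rr by (auto simp: deriv_roots_eval[OF dr])
  moreover have "quartic_deriv2 b1 b2 r \<le> 0 \<or> (\<exists>u. u \<noteq> r \<and> quartic b1 b2 b3 b4 u \<le> 0)"
  proof (cases "r0 = r2")
    case True
    then have "r = r0" "r1 = r0" using r rr by auto
    then show ?thesis using True by (simp add: deriv_roots_deriv2[OF dr])
  next
    case False
    then have "(r \<noteq> r0 \<and> quartic b1 b2 b3 b4 r0 \<le> 0) \<or> (r \<noteq> r2 \<and> quartic b1 b2 b3 b4 r2 \<le> 0)"
      using signs by blast
    then show ?thesis by auto
  qed
  ultimately show thesis using quartic_roots_at_double_root that by metis
next
  case False
  with signs have "quartic b1 b2 b3 b4 r0 < 0" "quartic b1 b2 b3 b4 r1 > 0" "quartic b1 b2 b3 b4 r2 < 0"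
    by auto
  from quartic_roots_of_strict_crit_signs[OF dr r this] that show thesis by blast
qed

text \<open>The largest of the three values is nonnegative and the median one is nonpositive.\<close>

definition crit_sign_pattern :: "real \<Rightarrow> real \<Rightarrow> real \<Rightarrow> bool" where
  "crit_sign_pattern g0 g1 g2 \<longleftrightarrow> (0 \<le> g0 \<or> 0 \<le> g1 \<or> 0 \<le> g2) \<and>
     (g0 \<le> 0 \<and> g1 \<le> 0 \<or> g0 \<le> 0 \<and> g2 \<le> 0 \<or> g1 \<le> 0 \<and> g2 \<le> 0)"

lemma real_triple_wlog_sorted:
  fixes P :: "real \<Rightarrow> real \<Rightarrow> real \<Rightarrow> bool"
  assumes swap12: "\<And>x y z. P x y z \<Longrightarrow> P y x z" and swap23: "\<And>x y z. P x y z \<Longrightarrow> P x z y"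
    and sorted: "\<And>x y z. x \<le> y \<Longrightarrow> y \<le> z \<Longrightarrow> P x y z"
  shows "P a b c"
proof -
  consider "a \<le> b" "b \<le> c" | "a \<le> c" "c \<le> b" | "b \<le> a" "a \<le> c" | "b \<le> c" "c \<le> a"
    | "c \<le> a" "a \<le> b" | "c \<le> b" "b \<le> a" by linarith
  then show ?thesis
    by cases (use sorted swap12 swap23 in metis)+
qed

lemma deriv_roots_value_gaps:
  assumes "deriv_roots b1 b2 b3 r0 r1 r2"
  shows "quartic b1 b2 b3 b4 r1 - quartic b1 b2 b3 b4 r0 = (r1 - r0)^3 * (2 * r2 - r0 - r1) / 3"
    and "quartic b1 b2 b3 b4 r1 - quartic b1 b2 b3 b4 r2 = (r2 - r1)^3 * (r1 + r2 - 2 * r0) / 3"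
proof -
  have b: "b1 = - 4 / 3 * (r0 + r1 + r2)" "b2 = 2 * (r0 * r1 + r0 * r2 + r1 * r2)"
    "b3 = - 4 * (r0 * r1 * r2)"
    using assms unfolding deriv_roots_iff_vieta by linarith+
  show "quartic b1 b2 b3 b4 r1 - quartic b1 b2 b3 b4 r0 = (r1 - r0)^3 * (2 * r2 - r0 - r1) / 3"
    "quartic b1 b2 b3 b4 r1 - quartic b1 b2 b3 b4 r2 = (r2 - r1)^3 * (r1 + r2 - 2 * r0) / 3"
    unfolding quartic_def b by (simp_all add: field_simps power2_eq_square power3_eq_cube power4_eq_xxxx)
qed

lemma real_rooted_iff_crit_sign_pattern_sorted:
  assumes dr: "deriv_roots b1 b2 b3 r0 r1 r2" and r: "r0 \<le> r1" "r1 \<le> r2"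
  shows "(\<exists>t1 t2 t3 t4. quartic_roots b1 b2 b3 b4 t1 t2 t3 t4) \<longleftrightarrow>
    crit_sign_pattern (quartic b1 b2 b3 b4 r0) (quartic b1 b2 b3 b4 r1) (quartic b1 b2 b3 b4 r2)"
proof
  assume "\<exists>t1 t2 t3 t4. quartic_roots b1 b2 b3 b4 t1 t2 t3 t4"
  then obtain t1 t2 t3 t4 where "t1 \<le> t2" "t2 \<le> t3" "t3 \<le> t4" "quartic_roots b1 b2 b3 b4 t1 t2 t3 t4"
    using quartic_roots_sorted by metis
  from quartic_at_sorted_deriv_roots[OF this(4,1-3) dr r]
  show "crit_sign_pattern (quartic b1 b2 b3 b4 r0) (quartic b1 b2 b3 b4 r1) (quartic b1 b2 b3 b4 r2)"
    by (auto simp: crit_sign_pattern_def)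
next
  assume pattern: "crit_sign_pattern (quartic b1 b2 b3 b4 r0) (quartic b1 b2 b3 b4 r1)
    (quartic b1 b2 b3 b4 r2)"
  have "(r1 - r0)^3 * (2 * r2 - r0 - r1) / 3 \<ge> 0" "(r2 - r1)^3 * (r1 + r2 - 2 * r0) / 3 \<ge> 0"
    using r by simp_all
  then have "quartic b1 b2 b3 b4 r0 \<le> quartic b1 b2 b3 b4 r1" "quartic b1 b2 b3 b4 r2 \<le> quartic b1 b2 b3 b4 r1"
    using deriv_roots_value_gaps[OF dr, of b4] by linarith+
  with pattern have "quartic b1 b2 b3 b4 r0 \<le> 0" "quartic b1 b2 b3 b4 r1 \<ge> 0" "quartic b1 b2 b3 b4 r2 \<le> 0"
    unfolding crit_sign_pattern_def by linarith+
  from quartic_roots_of_deriv_root_signs[OF dr r this]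
  show "\<exists>t1 t2 t3 t4. quartic_roots b1 b2 b3 b4 t1 t2 t3 t4" by blast
qed

lemma real_rooted_iff_crit_sign_pattern:
  assumes "deriv_roots b1 b2 b3 r0 r1 r2"
  shows "(\<exists>t1 t2 t3 t4. quartic_roots b1 b2 b3 b4 t1 t2 t3 t4) \<longleftrightarrow>
    crit_sign_pattern (quartic b1 b2 b3 b4 r0) (quartic b1 b2 b3 b4 r1) (quartic b1 b2 b3 b4 r2)"
proof -
  let ?G = "quartic b1 b2 b3 b4"
  have "deriv_roots b1 b2 b3 r0 r1 r2 \<longrightarrow> ((\<exists>t1 t2 t3 t4. quartic_roots b1 b2 b3 b4 t1 t2 t3 t4)
    \<longleftrightarrow> crit_sign_pattern (?G r0) (?G r1) (?G r2))"
  proof (rule real_triple_wlog_sorted[of "\<lambda>x y z. deriv_roots b1 b2 b3 x y z \<longrightarrow>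
      ((\<exists>t1 t2 t3 t4. quartic_roots b1 b2 b3 b4 t1 t2 t3 t4) \<longleftrightarrow> crit_sign_pattern (?G x) (?G y) (?G z))"])
    show "deriv_roots b1 b2 b3 x y z \<longrightarrow> ((\<exists>t1 t2 t3 t4. quartic_roots b1 b2 b3 b4 t1 t2 t3 t4)
        \<longleftrightarrow> crit_sign_pattern (?G x) (?G y) (?G z))" if "x \<le> y" "y \<le> z" for x y z
      using real_rooted_iff_crit_sign_pattern_sorted that by blast
  qed (auto dest: deriv_roots_swap12 deriv_roots_swap23 simp: crit_sign_pattern_def)
  with assms show ?thesis by blast
qed

section \<open>Roots in a symmetric interval\<close>

definition taylor_nonneg_at :: "real \<Rightarrow> real \<Rightarrow> real \<Rightarrow> real \<Rightarrow> real \<Rightarrow> bool" where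
  "taylor_nonneg_at b1 b2 b3 b4 p \<longleftrightarrow> 0 \<le> quartic_deriv3 b1 p \<and> 0 \<le> quartic_deriv2 b1 b2 p \<and>
     0 \<le> quartic_deriv b1 b2 b3 p \<and> 0 \<le> quartic b1 b2 b3 b4 p"

definition taylor_vanishes_at :: "real \<Rightarrow> real \<Rightarrow> real \<Rightarrow> real \<Rightarrow> real \<Rightarrow> bool" where
  "taylor_vanishes_at b1 b2 b3 b4 p \<longleftrightarrow> quartic_deriv3 b1 p = 0 \<or> quartic_deriv2 b1 b2 p = 0 \<or>
     quartic_deriv b1 b2 b3 p = 0 \<or> quartic b1 b2 b3 b4 p = 0"

lemma taylor_nonneg_of_roots_le:
  assumes roots: "quartic_roots b1 b2 b3 b4 t1 t2 t3 t4"
    and le: "t1 \<le> p" "t2 \<le> p" "t3 \<le> p" "t4 \<le> p"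
  shows "taylor_nonneg_at b1 b2 b3 b4 p"
  using le unfolding taylor_nonneg_at_def quartic_roots_deriv3[OF roots] quartic_roots_deriv2[OF roots]
    quartic_roots_deriv[OF roots] quartic_roots_eval[OF roots]
  by (simp add: add_nonneg_nonneg mult_nonneg_nonneg)

lemma quartic_zero_of_taylor_vanishes:
  assumes roots: "quartic_roots b1 b2 b3 b4 t1 t2 t3 t4"
    and le: "t1 \<le> p" "t2 \<le> p" "t3 \<le> p" "t4 \<le> p"
    and vanishes: "taylor_vanishes_at b1 b2 b3 b4 p"
  shows "quartic b1 b2 b3 b4 p = 0"
proof (rule ccontr)
  assume "quartic b1 b2 b3 b4 p \<noteq> 0"
  then have "p - t1 > 0" "p - t2 > 0" "p - t3 > 0" "p - t4 > 0"
    using le by (auto simp: quartic_roots_eval[OF roots])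
  then have "quartic_deriv3 b1 p > 0" "quartic_deriv2 b1 b2 p > 0" "quartic_deriv b1 b2 b3 p > 0"
    unfolding quartic_roots_deriv3[OF roots] quartic_roots_deriv2[OF roots] quartic_roots_deriv[OF roots]
    by (simp_all add: add_pos_pos)
  with vanishes \<open>quartic b1 b2 b3 b4 p \<noteq> 0\<close> show False by (auto simp: taylor_vanishes_at_def)
qed

lemma root_le_of_taylor_nonneg:
  assumes "taylor_nonneg_at b1 b2 b3 b4 p" and "quartic b1 b2 b3 b4 t = 0"
  shows "t \<le> p"
proof (rule ccontr)
  assume "\<not> t \<le> p"
  then have "t - p > 0" by simp
  then have "quartic b1 b2 b3 b4 (p + (t - p)) > 0"
    using assms(1) unfolding quartic_taylor taylor_nonneg_at_def
    by (intro add_pos_nonneg mult_nonneg_nonneg) auto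
  with assms(2) show False by simp
qed

lemma quartic_roots_bounded_iff_taylor_nonneg:
  assumes roots: "quartic_roots b1 b2 b3 b4 t1 t2 t3 t4"
  shows "(\<forall>t\<in>{t1, t2, t3, t4}. \<bar>t\<bar> \<le> p) \<longleftrightarrow>
    taylor_nonneg_at b1 b2 b3 b4 p \<and> taylor_nonneg_at (- b1) b2 (- b3) b4 p"
proof
  assume "\<forall>t\<in>{t1, t2, t3, t4}. \<bar>t\<bar> \<le> p"
  then show "taylor_nonneg_at b1 b2 b3 b4 p \<and> taylor_nonneg_at (- b1) b2 (- b3) b4 p"
    using taylor_nonneg_of_roots_le[OF roots] taylor_nonneg_of_roots_le[OF quartic_roots_reflect[OF roots]]
    by (simp add: abs_le_iff)
next
  assume taylor: "taylor_nonneg_at b1 b2 b3 b4 p \<and> taylor_nonneg_at (- b1) b2 (- b3) b4 p"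
  have "t \<le> p \<and> - t \<le> p" if "t \<in> {t1, t2, t3, t4}" for t
  proof -
    have "quartic b1 b2 b3 b4 t = 0" using that by (auto simp: quartic_roots_eval[OF roots])
    then have "quartic (- b1) b2 (- b3) b4 (- t) = 0" by (simp add: quartic_reflect)
    with \<open>quartic b1 b2 b3 b4 t = 0\<close> show ?thesis using taylor root_le_of_taylor_nonneg by blast
  qed
  then show "\<forall>t\<in>{t1, t2, t3, t4}. \<bar>t\<bar> \<le> p" by (auto simp: abs_le_iff)
qed

section \<open>Cardano's formula for the critical points\<close>

lemma primitive_cube_root_of_unity:
  fixes \<zeta> :: complex
  assumes "\<zeta>^3 = 1" "\<zeta> \<noteq> 1"
  shows "\<zeta>^2 + \<zeta> + 1 = 0" "\<zeta> * cnj \<zeta> = 1" "inverse \<zeta> = cnj \<zeta>"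
proof -
  have "(\<zeta> - 1) * (\<zeta>^2 + \<zeta> + 1) = 0" using assms(1) by algebra
  then show "\<zeta>^2 + \<zeta> + 1 = 0" using assms(2) by simp
  have "cmod \<zeta> ^ 3 = 1" using assms(1) by (metis norm_one norm_power)
  then have "cmod \<zeta> = 1" using power_eq_iff_eq_base[of 3 "cmod \<zeta>" 1] by simp
  then show "\<zeta> * cnj \<zeta> = 1" using complex_norm_square[of \<zeta>] by simp
  then show "inverse \<zeta> = cnj \<zeta>" by (simp add: inverse_unique)
qed

lemma sqrt_of_nonpos_real:
  fixes s :: complex and D :: real
  assumes "s^2 = complex_of_real D" "D \<le> 0"
  shows "cnj s = - s" "cmod s ^ 2 = - D"
proof -
  have eqs: "Re s ^ 2 - Im s ^ 2 = D" "Re s * Im s = 0"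
    using assms(1) by (auto simp: power2_eq_square complex_eq_iff)
  have "Re s = 0"
  proof (rule ccontr)
    assume "Re s \<noteq> 0"
    with eqs have "Re s ^ 2 = D" by simp
    with \<open>Re s \<noteq> 0\<close> assms(2) show False by (metis not_le zero_less_power2)
  qed
  then show "cnj s = - s" by (simp add: complex_eq_iff)
  show "cmod s ^ 2 = - D" using eqs(1) \<open>Re s = 0\<close> by (simp add: cmod_power2)
qed

lemma cardano_cube_root_norm:
  fixes om s :: complex and U2 U3 :: real
  assumes s: "s^2 = complex_of_real (U3^2 + 4 * U2^3 / 27)" "U3^2 + 4 * U2^3 / 27 \<le> 0"
    and om: "om^3 = (- complex_of_real U3 + s) / 2"
  shows "om * cnj om = - complex_of_real U2 / 3"
proof -
  note s' = sqrt_of_nonpos_real[OF s]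
  have "Re s = 0" using s'(1) by (simp add: complex_eq_iff)
  then have "Im s ^ 2 = - (U3^2 + 4 * U2^3 / 27)" using s'(2) by (simp add: cmod_power2)
  moreover have "(cmod om ^ 2) ^ 3 = cmod (om^3) ^ 2" by (simp add: norm_power flip: power_mult)
  moreover have "cmod (om^3) ^ 2 = (U3^2 + Im s ^ 2) / 4"
    unfolding om cmod_power2 using \<open>Re s = 0\<close> by (simp add: power2_eq_square algebra_simps)
  ultimately have norm3: "(cmod om ^ 2) ^ 3 = (- U2 / 3) ^ 3" by (simp add: power3_eq_cube algebra_simps)
  then have "0 \<le> (- U2 / 3) ^ 3" by (metis zero_le_power norm_ge_zero)
  then have "0 \<le> - U2 / 3" by (simp add: zero_le_odd_power)
  with norm3 have "cmod om ^ 2 = - U2 / 3" using power_eq_iff_eq_base[of 3 "cmod om ^ 2" "- U2 / 3"] by simp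
  then show ?thesis using complex_norm_square[of om] by simp
qed

text \<open>The roots of y^3 + U2 y - U3 by Cardano's formula, with cube roots zeta^k om and their
  conjugates; the conjugate is the right second cube root because the discriminant is
  nonpositive (cardano_cube_root_norm).\<close>

definition cardano_root :: "complex \<Rightarrow> complex \<Rightarrow> nat \<Rightarrow> real" where
  "cardano_root \<zeta> om k = - (2 * Re (\<zeta>^k * om))"

lemma cardano_root_as_sum:
  "complex_of_real (cardano_root \<zeta> om k) = - (\<zeta>^k * om + cnj (\<zeta>^k * om))"
  by (simp only: cardano_root_def of_real_minus complex_add_cnj)

lemma cardano_roots_vieta:
  fixes U2 U3 :: real and \<zeta> s om :: complex
  assumes \<zeta>: "\<zeta>^3 = 1" "\<zeta> \<noteq> 1"
    and s: "s^2 = complex_of_real (U3^2 + 4 * U2^3 / 27)" "U3^2 + 4 * U2^3 / 27 \<le> 0"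
    and om: "om^3 = (- complex_of_real U3 + s) / 2"
  shows "cardano_root \<zeta> om 0 + cardano_root \<zeta> om 1 + cardano_root \<zeta> om 2 = 0"
    "cardano_root \<zeta> om 0 * cardano_root \<zeta> om 1 + cardano_root \<zeta> om 0 * cardano_root \<zeta> om 2
       + cardano_root \<zeta> om 1 * cardano_root \<zeta> om 2 = U2"
    "cardano_root \<zeta> om 0 * cardano_root \<zeta> om 1 * cardano_root \<zeta> om 2 = U3"
proof -
  note unity = primitive_cube_root_of_unity[OF \<zeta>]
  have om': "cnj om ^ 3 = (- complex_of_real U3 - s) / 2"
    using arg_cong[OF om, of cnj] sqrt_of_nonpos_real(1)[OF s] by simp
  note norm = cardano_cube_root_norm[OF s om]
  let ?y = "\<lambda>k. complex_of_real (cardano_root \<zeta> om k)"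
  have y: "?y 0 = - (om + cnj om)" "?y 1 = - (\<zeta> * om + cnj \<zeta> * cnj om)"
    "?y 2 = - (\<zeta>^2 * om + cnj \<zeta> ^ 2 * cnj om)"
    by (simp_all add: cardano_root_as_sum)
  have "?y 0 + ?y 1 + ?y 2 = 0"
    unfolding y using unity(1,2) om om' norm by algebra
  then show "cardano_root \<zeta> om 0 + cardano_root \<zeta> om 1 + cardano_root \<zeta> om 2 = 0"
    by (simp only: of_real_add [symmetric] of_real_eq_0_iff)
  have "?y 0 * ?y 1 + ?y 0 * ?y 2 + ?y 1 * ?y 2 = complex_of_real U2"
    unfolding y using unity(1,2) om om' norm by algebra
  then show "cardano_root \<zeta> om 0 * cardano_root \<zeta> om 1 + cardano_root \<zeta> om 0 * cardano_root \<zeta> om 2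
       + cardano_root \<zeta> om 1 * cardano_root \<zeta> om 2 = U2"
    by (simp only: of_real_add [symmetric] of_real_mult [symmetric] of_real_eq_iff)
  have "?y 0 * ?y 1 * ?y 2 = complex_of_real U3"
    unfolding y using unity(1,2) om om' norm by algebra
  then show "cardano_root \<zeta> om 0 * cardano_root \<zeta> om 1 * cardano_root \<zeta> om 2 = U3"
    by (simp only: of_real_mult [symmetric] of_real_eq_iff)
qed

lemma cardano_S_term:
  fixes U2 U3 :: real and \<zeta> s om :: complex
  assumes \<zeta>: "\<zeta>^3 = 1" "\<zeta> \<noteq> 1"
    and s: "s^2 = complex_of_real (U3^2 + 4 * U2^3 / 27)" "U3^2 + 4 * U2^3 / 27 \<le> 0"
    and om: "om^3 = (- complex_of_real U3 + s) / 2"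
  shows "- (\<zeta>^k) * om * (9 * complex_of_real U3 / 2 + 3 * s / 2)
      - (inverse \<zeta>) ^ k * cnj om * (9 * complex_of_real U3 / 2 - 3 * s / 2) + 2 * complex_of_real U2 ^ 2 / 3
    = complex_of_real (- (cardano_root \<zeta> om k ^ 4 + 2 * U2 * cardano_root \<zeta> om k ^ 2
        - 4 * U3 * cardano_root \<zeta> om k))"
proof -
  note unity = primitive_cube_root_of_unity[OF \<zeta>]
  define z where "z = \<zeta>^k * om"
  have "z^3 = (\<zeta>^3) ^ k * om^3"
    unfolding z_def by (simp add: power_mult_distrib flip: power_mult) (simp add: mult.commute)
  then have z3: "z^3 = (- complex_of_real U3 + s) / 2" using \<zeta>(1) om by simp
  have w: "(inverse \<zeta>) ^ k * cnj om = cnj z" by (simp add: z_def unity(3))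
  have w3: "cnj z ^ 3 = (- complex_of_real U3 - s) / 2"
    using arg_cong[OF z3, of cnj] sqrt_of_nonpos_real(1)[OF s] by simp
  have zw: "z * cnj z = - complex_of_real U2 / 3"
  proof -
    have "z * cnj z = (\<zeta> * cnj \<zeta>) ^ k * (om * cnj om)"
      by (simp add: z_def power_mult_distrib algebra_simps)
    then show ?thesis using unity(2) cardano_cube_root_norm[OF s om] by simp
  qed
  have y: "complex_of_real (cardano_root \<zeta> om k) = - (z + cnj z)"
    by (simp add: z_def cardano_root_as_sum)
  have "- (\<zeta>^k) * om * (9 * complex_of_real U3 / 2 + 3 * s / 2)
      - (inverse \<zeta>) ^ k * cnj om * (9 * complex_of_real U3 / 2 - 3 * s / 2) + 2 * complex_of_real U2 ^ 2 / 3
    = - z * (9 * complex_of_real U3 / 2 + 3 * s / 2) - cnj z * (9 * complex_of_real U3 / 2 - 3 * s / 2)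
      + 2 * complex_of_real U2 ^ 2 / 3"
    unfolding w by (simp add: z_def)
  also have "\<dots> = - ((- (z + cnj z))^4 + 2 * complex_of_real U2 * (- (z + cnj z))^2
      - 4 * complex_of_real U3 * (- (z + cnj z)))"
    using z3 w3 zw by algebra
  finally show ?thesis unfolding y[symmetric] by simp
qed

section \<open>Weil polynomials as products of conjugate pairs\<close>

lemma map_poly_of_int_mult:
  "map_poly (of_int :: int \<Rightarrow> 'a::comm_ring_1) (p * r) = map_poly of_int p * map_poly of_int r"
  by (rule poly_eqI) (simp add: coeff_map_poly coeff_mult)

lemma map_poly_of_int_power:
  "map_poly (of_int :: int \<Rightarrow> 'a::comm_ring_1) (p ^ n) = map_poly of_int p ^ n"
  by (induct n) (simp_all add: map_poly_of_int_mult)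

lemma map_poly_of_int_add:
  "map_poly (of_int :: int \<Rightarrow> 'a::comm_ring_1) (p + r) = map_poly of_int p + map_poly of_int r"
  by (rule poly_eqI) (simp add: coeff_map_poly)

lemma map_poly_of_int_eq_0_iff: "map_poly (of_int :: int \<Rightarrow> complex) p = 0 \<longleftrightarrow> p = 0"
  by (auto simp: poly_eq_iff coeff_map_poly)

lemma map_poly_of_real_mult:
  "map_poly complex_of_real (p * r) = map_poly complex_of_real p * map_poly complex_of_real r"
  by (rule poly_eqI) (simp add: coeff_map_poly coeff_mult)

lemma map_poly_of_real_eq_iff:
  "map_poly complex_of_real p = map_poly complex_of_real r \<longleftrightarrow> p = r"
  by (auto simp: poly_eq_iff coeff_map_poly)

lemma map_poly_of_int_via_real:
  "map_poly (of_int :: int \<Rightarrow> complex) p = map_poly complex_of_real (map_poly real_of_int p)"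
  by (simp add: map_poly_map_poly o_def)

lemma poly_map_of_int_of_real:
  "poly (map_poly (of_int :: int \<Rightarrow> complex) p) (complex_of_real x) =
     complex_of_real (poly (map_poly of_int p) x)"
  by (induct p rule: pCons_induct) (simp_all add: map_poly_pCons)

definition conj_pair :: "complex \<Rightarrow> complex poly" where
  "conj_pair w = [:- w, 1:] * [:- cnj w, 1:]"

lemma conj_pair_of_norm:
  assumes "cmod w = sqrt (real q)"
  shows "conj_pair w = map_poly complex_of_real [:real q, - (2 * Re w), 1:]"
proof -
  have "w * cnj w = complex_of_real (real q)"
    using complex_norm_square[of w] assms by simp
  then show ?thesis
    using complex_add_cnj[of w] by (simp add: conj_pair_def map_poly_pCons algebra_simps)
qed

lemma prod_conj_pairs_monic:
  "degree (\<Prod>w\<leftarrow>ws. conj_pair w) = 2 * length ws \<and> lead_coeff (\<Prod>w\<leftarrow>ws. conj_pair w) = 1"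
proof (induction ws)
  case (Cons w ws)
  let ?P = "\<Prod>w\<leftarrow>ws. conj_pair w"
  from Cons.IH have IH: "degree ?P = 2 * length ws" "lead_coeff ?P = 1" by auto
  have w: "degree (conj_pair w) = 2" "lead_coeff (conj_pair w) = 1" by (simp_all add: conj_pair_def)
  then have "conj_pair w \<noteq> 0" "?P \<noteq> 0" using IH by auto
  then have "degree (conj_pair w * ?P) = 2 * length (w # ws)" using w IH by (simp add: degree_mult_eq)
  moreover have "lead_coeff (conj_pair w * ?P) = 1" using w IH by (simp only: lead_coeff_mult) simp
  ultimately show ?case by simp
qed simp

lemma W_iff_conj_pairs:
  assumes "g > 0"
  shows "h \<in> W q g \<longleftrightarrow> (\<exists>ws. length ws = g \<and> (\<forall>w\<in>set ws. cmod w = sqrt (real q)) \<and>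
     map_poly of_int h = (\<Prod>w\<leftarrow>ws. conj_pair w))"
proof
  assume "h \<in> W q g"
  then show "\<exists>ws. length ws = g \<and> (\<forall>w\<in>set ws. cmod w = sqrt (real q)) \<and>
     map_poly of_int h = (\<Prod>w\<leftarrow>ws. conj_pair w)"
    unfolding W_def weil_poly_def conj_pair_def by auto
next
  assume "\<exists>ws. length ws = g \<and> (\<forall>w\<in>set ws. cmod w = sqrt (real q)) \<and>
     map_poly of_int h = (\<Prod>w\<leftarrow>ws. conj_pair w)"
  then obtain ws where ws: "length ws = g" "\<forall>w\<in>set ws. cmod w = sqrt (real q)"
    "map_poly of_int h = (\<Prod>w\<leftarrow>ws. conj_pair w)" by blast
  have deg: "degree (map_poly (of_int :: int \<Rightarrow> complex) h) = degree h"
    by (simp add: degree_map_poly)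
  then have "degree h = 2 * g" using ws prod_conj_pairs_monic[of ws] by simp
  moreover have "lead_coeff (\<Prod>w\<leftarrow>ws. conj_pair w) = 1" using prod_conj_pairs_monic by blast
  with ws(3) have "lead_coeff (map_poly (of_int :: int \<Rightarrow> complex) h) = 1" by (simp only:)
  then have "lead_coeff h = 1" using deg by (simp add: coeff_map_poly)
  ultimately show "h \<in> W q g"
    using assms ws unfolding W_def weil_poly_def conj_pair_def by auto
qed

lemma monic_int_poly_dvd:
  fixes h d :: "int poly" and F :: "complex poly"
  assumes d: "lead_coeff d = 1" and h: "map_poly of_int h = map_poly of_int d * F"
  obtains h0 where "h = d * h0" "map_poly of_int h0 = F"
proof -
  have "d \<noteq> 0" using d by auto
  obtain A R where AR: "pseudo_divmod h d = (A, R)" by fastforce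
  have h_eq: "h = d * A + R" and R: "R = 0 \<or> degree R < degree d"
    using pseudo_divmod[OF \<open>d \<noteq> 0\<close> AR] d by simp_all
  let ?d = "map_poly (of_int :: int \<Rightarrow> complex) d"
  have R_eq: "map_poly of_int R = ?d * (F - map_poly of_int A)"
    using h unfolding h_eq map_poly_of_int_add map_poly_of_int_mult by (simp add: algebra_simps)
  have "F = map_poly of_int A"
  proof (rule ccontr)
    assume "F \<noteq> map_poly of_int A"
    moreover have "?d \<noteq> 0" using \<open>d \<noteq> 0\<close> by (simp add: map_poly_of_int_eq_0_iff)
    ultimately have "map_poly of_int R \<noteq> (0 :: complex poly)"
      "degree (map_poly (of_int :: int \<Rightarrow> complex) R) = degree d + degree (F - map_poly of_int A)"
      using R_eq by (simp_all add: degree_mult_eq degree_map_poly)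
    then have "R \<noteq> 0" "degree d \<le> degree R" by (auto simp: degree_map_poly)
    with R show False by simp
  qed
  then have "R = 0" using R_eq by (simp add: map_poly_of_int_eq_0_iff)
  with h_eq \<open>F = map_poly of_int A\<close> show thesis using that[of A] by simp
qed

lemma prod_conj_pairs_split:
  assumes "mset vs \<subseteq># mset ws"
  obtains rest where "mset ws = mset vs + mset rest"
    "(\<Prod>w\<leftarrow>ws. conj_pair w) = (\<Prod>w\<leftarrow>vs. conj_pair w) * (\<Prod>w\<leftarrow>rest. conj_pair w)"
proof -
  obtain rest where rest: "mset ws = mset vs + mset rest"
    using assms ex_mset by (metis mset_subset_eq_exists_conv)
  then have "(\<Prod>w\<leftarrow>ws. conj_pair w) = (\<Prod>w\<leftarrow>vs. conj_pair w) * (\<Prod>w\<leftarrow>rest. conj_pair w)"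
    by (metis image_mset_union mset_map prod_mset.union prod_mset_prod_list)
  with rest show thesis by (rule that)
qed

lemma W_divide_conj_pairs:
  fixes h d :: "int poly"
  assumes "g > 0" and ws: "length ws = length vs + g" "\<forall>w\<in>set ws. cmod w = sqrt (real q)"
    "map_poly of_int h = (\<Prod>w\<leftarrow>ws. conj_pair w)"
    and sub: "mset vs \<subseteq># mset ws"
    and d: "lead_coeff d = 1" "map_poly of_int d = (\<Prod>w\<leftarrow>vs. conj_pair w)"
  obtains h0 where "h0 \<in> W q g" "h = d * h0"
proof -
  obtain rest where rest: "mset ws = mset vs + mset rest"
    "(\<Prod>w\<leftarrow>ws. conj_pair w) = (\<Prod>w\<leftarrow>vs. conj_pair w) * (\<Prod>w\<leftarrow>rest. conj_pair w)"
    using prod_conj_pairs_split[OF sub] by blast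
  obtain h0 where h0: "h = d * h0" "map_poly of_int h0 = (\<Prod>w\<leftarrow>rest. conj_pair w)"
    using monic_int_poly_dvd[OF d(1)] ws(3) d(2) rest(2) by metis
  have "length rest = g" using arg_cong[OF rest(1), of size] ws(1) by simp
  moreover have "set rest \<subseteq> set ws" using rest(1) by (metis Un_upper2 set_mset_mset set_mset_union)
  ultimately have "h0 \<in> W q g" using ws(2) h0(2) \<open>g > 0\<close> by (auto simp: W_iff_conj_pairs)
  with h0(1) that show thesis by blast
qed

lemma W_mult_conj_pairs:
  fixes h0 d :: "int poly"
  assumes "h0 \<in> W q g" "map_poly of_int d = (\<Prod>w\<leftarrow>vs. conj_pair w)"
    "\<forall>w\<in>set vs. cmod w = sqrt (real q)"
  shows "d * h0 \<in> W q (length vs + g)"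
proof -
  have "g > 0" using assms(1) by (simp add: W_def weil_poly_def)
  then obtain ws where ws: "length ws = g" "\<forall>w\<in>set ws. cmod w = sqrt (real q)"
    "map_poly of_int h0 = (\<Prod>w\<leftarrow>ws. conj_pair w)"
    using assms(1) by (auto simp: W_iff_conj_pairs)
  then have "map_poly of_int (d * h0) = (\<Prod>w\<leftarrow>vs @ ws. conj_pair w)"
    using assms(2) by (simp add: map_poly_of_int_mult)
  with ws assms(3) \<open>g > 0\<close> show ?thesis
    by (subst W_iff_conj_pairs) (auto intro!: exI[of _ "vs @ ws"])
qed

lemma real_root_in_conj_pairs:
  fixes h :: "int poly" and x :: real
  assumes "map_poly of_int h = (\<Prod>w\<leftarrow>ws. conj_pair w)" "poly (map_poly of_int h) x = 0"
  shows "complex_of_real x \<in> set ws"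
proof -
  have "poly (map_poly (of_int :: int \<Rightarrow> complex) h) (complex_of_real x) = 0"
    using assms(2) by (simp add: poly_map_of_int_of_real)
  then have "(\<Prod>w\<leftarrow>ws. poly (conj_pair w) (complex_of_real x)) = 0"
    using assms(1) poly_prod_list[of "map conj_pair ws" "complex_of_real x"] by (simp add: o_def)
  then obtain w where "w \<in> set ws" "poly (conj_pair w) (complex_of_real x) = 0"
    by (auto simp: prod_list_zero_iff)
  moreover have "poly (conj_pair w) (complex_of_real x) = (complex_of_real x - w) * (complex_of_real x - cnj w)"
    by (simp add: conj_pair_def algebra_simps)
  ultimately show ?thesis by (metis complex_cnj_cnj complex_cnj_complex_of_real eq_iff_diff_eq_0 mult_eq_0_iff)
qed

section \<open>The real quartic attached to h\<close>

text \<open>The coefficients of the quartic G with h(x) = x^4 G(x + q/x), see hpoly_eval.\<close>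

definition weil_b2 :: "nat \<Rightarrow> int \<Rightarrow> real" where
  "weil_b2 q a2 = a2 - 4 * real q"

definition weil_b3 :: "nat \<Rightarrow> int \<Rightarrow> int \<Rightarrow> real" where
  "weil_b3 q a1 a3 = a3 - 3 * real q * a1"

definition weil_b4 :: "nat \<Rightarrow> int \<Rightarrow> int \<Rightarrow> real" where
  "weil_b4 q a2 a4 = a4 - 2 * real q * a2 + 2 * real q ^ 2"

abbreviation weil_quartic :: "nat \<Rightarrow> int \<Rightarrow> int \<Rightarrow> int \<Rightarrow> int \<Rightarrow> real \<Rightarrow> real" where
  "weil_quartic q a1 a2 a3 a4 \<equiv> quartic a1 (weil_b2 q a2) (weil_b3 q a1 a3) (weil_b4 q a2 a4)"

abbreviation weil_quartic_reflected :: "nat \<Rightarrow> int \<Rightarrow> int \<Rightarrow> int \<Rightarrow> int \<Rightarrow> real \<Rightarrow> real" where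
  "weil_quartic_reflected q a1 a2 a3 a4 \<equiv>
     quartic (- real_of_int a1) (weil_b2 q a2) (- weil_b3 q a1 a3) (weil_b4 q a2 a4)"

lemma hpoly_eval:
  fixes x :: real
  assumes "x \<noteq> 0"
  shows "poly (map_poly of_int (hpoly q a1 a2 a3 a4)) x = x^4 * weil_quartic q a1 a2 a3 a4 (x + real q / x)"
  using assms unfolding hpoly_def quartic_def weil_b2_def weil_b3_def weil_b4_def
  by (simp add: map_poly_pCons field_simps power2_eq_square power3_eq_cube power4_eq_xxxx)

lemma hpoly_real_eq_prod_iff:
  "map_poly real_of_int (hpoly q a1 a2 a3 a4) =
     [:real q, - t1, 1:] * [:real q, - t2, 1:] * [:real q, - t3, 1:] * [:real q, - t4, 1:]
   \<longleftrightarrow> quartic_roots a1 (weil_b2 q a2) (weil_b3 q a1 a3) (weil_b4 q a2 a4) t1 t2 t3 t4"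
proof -
  let ?e1 = "t1 + t2 + t3 + t4"
  let ?e2 = "t1 * t2 + t1 * t3 + t1 * t4 + t2 * t3 + t2 * t4 + t3 * t4"
  let ?e3 = "t1 * t2 * t3 + t1 * t2 * t4 + t1 * t3 * t4 + t2 * t3 * t4"
  let ?e4 = "t1 * t2 * t3 * t4"
  let ?Q = "real q"
  have "[:?Q, - t1, 1:] * [:?Q, - t2, 1:] * [:?Q, - t3, 1:] * [:?Q, - t4, 1:] =
    [:?Q^4, - (?Q^3 * ?e1), ?Q^2 * (?e2 + 4 * ?Q), - (?Q * (?e3 + 3 * ?Q * ?e1)),
      ?e4 + 2 * ?Q * ?e2 + 6 * ?Q^2, - (?e3 + 3 * ?Q * ?e1), ?e2 + 4 * ?Q, - ?e1, 1:]"
    by (simp add: algebra_simps power2_eq_square power3_eq_cube power4_eq_xxxx numeral_eq_Suc)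
  note expand = this
  have coeffs: "map_poly real_of_int (hpoly q a1 a2 a3 a4) =
      [:?Q^4, a1 * ?Q^3, a2 * ?Q^2, a3 * ?Q, a4, a3, a2, a1, 1:]"
    by (simp add: hpoly_def map_poly_pCons)
  show ?thesis
  proof
    assume "map_poly real_of_int (hpoly q a1 a2 a3 a4) =
      [:?Q, - t1, 1:] * [:?Q, - t2, 1:] * [:?Q, - t3, 1:] * [:?Q, - t4, 1:]"
    then have "real_of_int a1 = - ?e1" "real_of_int a2 = ?e2 + 4 * ?Q"
      "real_of_int a3 = - (?e3 + 3 * ?Q * ?e1)" "real_of_int a4 = ?e4 + 2 * ?Q * ?e2 + 6 * ?Q^2"
      unfolding coeffs expand pCons_eq_iff by blast+
    then have "weil_b2 q a2 = ?e2" "weil_b3 q a1 a3 = - ?e3" "weil_b4 q a2 a4 = ?e4"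
      unfolding weil_b2_def weil_b3_def weil_b4_def by algebra+
    with \<open>real_of_int a1 = - ?e1\<close>
    show "quartic_roots a1 (weil_b2 q a2) (weil_b3 q a1 a3) (weil_b4 q a2 a4) t1 t2 t3 t4"
      unfolding quartic_roots_iff_vieta by simp
  next
    assume "quartic_roots a1 (weil_b2 q a2) (weil_b3 q a1 a3) (weil_b4 q a2 a4) t1 t2 t3 t4"
    then have "real_of_int a1 = - ?e1" "real_of_int a2 - 4 * ?Q = ?e2"
      "real_of_int a3 - 3 * ?Q * a1 = - ?e3" "real_of_int a4 - 2 * ?Q * a2 + 2 * ?Q^2 = ?e4"
      unfolding quartic_roots_iff_vieta weil_b2_def weil_b3_def weil_b4_def by auto
    then have eqs: "real_of_int a1 = - ?e1" "real_of_int a2 = ?e2 + 4 * ?Q"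
      "real_of_int a3 = - (?e3 + 3 * ?Q * ?e1)" "real_of_int a4 = ?e4 + 2 * ?Q * ?e2 + 6 * ?Q^2"
      by algebra+
    show "map_poly real_of_int (hpoly q a1 a2 a3 a4) =
      [:?Q, - t1, 1:] * [:?Q, - t2, 1:] * [:?Q, - t3, 1:] * [:?Q, - t4, 1:]"
      unfolding coeffs expand eqs by (simp add: algebra_simps)
  qed
qed

lemma hpoly_eq_conj_pairs_iff:
  assumes "cmod w1 = sqrt (real q)" "cmod w2 = sqrt (real q)" "cmod w3 = sqrt (real q)"
    "cmod w4 = sqrt (real q)"
  shows "map_poly of_int (hpoly q a1 a2 a3 a4) = (\<Prod>w\<leftarrow>[w1, w2, w3, w4]. conj_pair w) \<longleftrightarrow>
    quartic_roots a1 (weil_b2 q a2) (weil_b3 q a1 a3) (weil_b4 q a2 a4)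
      (2 * Re w1) (2 * Re w2) (2 * Re w3) (2 * Re w4)"
proof -
  have "(\<Prod>w\<leftarrow>[w1, w2, w3, w4]. conj_pair w) = map_poly complex_of_real
      ([:real q, - (2 * Re w1), 1:] * [:real q, - (2 * Re w2), 1:] * [:real q, - (2 * Re w3), 1:]
        * [:real q, - (2 * Re w4), 1:])"
    using assms by (simp only: list.map prod_list.Cons prod_list.Nil mult_1_right conj_pair_of_norm
        map_poly_of_real_mult mult.assoc)
  then show ?thesis
    by (simp only: map_poly_of_int_via_real map_poly_of_real_eq_iff hpoly_real_eq_prod_iff)
qed

lemma hpoly_in_W_iff_bounded_roots:
  "hpoly q a1 a2 a3 a4 \<in> W q 4 \<longleftrightarrow> (\<exists>t1 t2 t3 t4.
     quartic_roots a1 (weil_b2 q a2) (weil_b3 q a1 a3) (weil_b4 q a2 a4) t1 t2 t3 t4 \<and>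
     (\<forall>t\<in>{t1, t2, t3, t4}. \<bar>t\<bar> \<le> 2 * sqrt (real q)))"
  (is "_ \<longleftrightarrow> (\<exists>t1 t2 t3 t4. ?roots t1 t2 t3 t4 \<and> _)")
proof
  assume "hpoly q a1 a2 a3 a4 \<in> W q 4"
  then obtain ws where ws: "length ws = 4" "\<forall>w\<in>set ws. cmod w = sqrt (real q)"
    "map_poly of_int (hpoly q a1 a2 a3 a4) = (\<Prod>w\<leftarrow>ws. conj_pair w)"
    by (auto simp: W_iff_conj_pairs)
  then obtain w1 w2 w3 w4 where ws_eq: "ws = [w1, w2, w3, w4]"
    by (auto simp: length_Suc_conv numeral_eq_Suc)
  have "\<bar>2 * Re w\<bar> \<le> 2 * sqrt (real q)" if "w \<in> set ws" for w
    using abs_Re_le_cmod[of w] ws(2) that by simp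
  then show "\<exists>t1 t2 t3 t4. ?roots t1 t2 t3 t4 \<and> (\<forall>t\<in>{t1, t2, t3, t4}. \<bar>t\<bar> \<le> 2 * sqrt (real q))"
    using hpoly_eq_conj_pairs_iff[of w1 q w2 w3 w4 a1 a2 a3 a4] ws unfolding ws_eq by fastforce
next
  assume "\<exists>t1 t2 t3 t4. ?roots t1 t2 t3 t4 \<and> (\<forall>t\<in>{t1, t2, t3, t4}. \<bar>t\<bar> \<le> 2 * sqrt (real q))"
  then obtain t1 t2 t3 t4 where roots: "?roots t1 t2 t3 t4"
    and bounded: "\<forall>t\<in>{t1, t2, t3, t4}. \<bar>t\<bar> \<le> 2 * sqrt (real q)" by blast
  define w where "w t = Complex (t / 2) (sqrt (real q - (t / 2)^2))" for t
  have w: "cmod (w t) = sqrt (real q)" "2 * Re (w t) = t" if "t \<in> {t1, t2, t3, t4}" for t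
  proof -
    have "\<bar>t\<bar> \<le> \<bar>2 * sqrt (real q)\<bar>" using bounded that by auto
    then have "t^2 \<le> (2 * sqrt (real q))^2" by (simp only: abs_le_square_iff)
    then have "(t / 2)^2 \<le> real q" by (simp add: power_divide power_mult_distrib)
    then show "cmod (w t) = sqrt (real q)" by (simp add: w_def cmod_def)
    show "2 * Re (w t) = t" by (simp add: w_def)
  qed
  have "map_poly of_int (hpoly q a1 a2 a3 a4) = (\<Prod>w\<leftarrow>[w t1, w t2, w t3, w t4]. conj_pair w)"
    using hpoly_eq_conj_pairs_iff[of "w t1" q "w t2" "w t3" "w t4" a1 a2 a3 a4] w roots by auto
  moreover have "\<forall>v\<in>set [w t1, w t2, w t3, w t4]. cmod v = sqrt (real q)" using w by simp
  moreover have "length [w t1, w t2, w t3, w t4] = 4" by simp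
  ultimately show "hpoly q a1 a2 a3 a4 \<in> W q 4"
    unfolding W_iff_conj_pairs[of 4, OF zero_less_numeral] by blast
qed

lemma u2_eq_deriv_u2: "u2 q a1 a2 = deriv_u2 a1 (weil_b2 q a2)"
  unfolding u2_def deriv_u2_def weil_b2_def by (simp add: field_simps)

lemma u3_eq_deriv_u3: "u3 q a1 a2 a3 = deriv_u3 a1 (weil_b2 q a2) (weil_b3 q a1 a3)"
  unfolding u3_def deriv_u3_def weil_b2_def weil_b3_def by (simp add: field_simps power3_eq_cube)

lemma Disc_eq_deriv_disc: "Disc q a1 a2 a3 = deriv_disc a1 (weil_b2 q a2) (weil_b3 q a1 a3)"
  unfolding Disc_def deriv_disc_def u2_eq_deriv_u2 u3_eq_deriv_u3 ..

lemma quartic_roots_coeff_bound: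
  assumes "quartic_roots b1 b2 b3 b4 t1 t2 t3 t4"
  shows "8 * b2 \<le> 3 * b1^2"
proof -
  have "3 * b1^2 - 8 * b2
      = (t1 - t2)^2 + (t1 - t3)^2 + (t1 - t4)^2 + (t2 - t3)^2 + (t2 - t4)^2 + (t3 - t4)^2"
    using assms unfolding quartic_roots_iff_vieta by (elim conjE) algebra
  then show ?thesis by (smt (verit) zero_le_power2)
qed

lemma cond_b_iff: "cond_b q a1 a2 \<longleftrightarrow> 8 * weil_b2 q a2 \<le> 3 * real_of_int a1 ^ 2"
  unfolding cond_b_def weil_b2_def by auto

lemma cond_d_iff:
  assumes "cond_b q a1 a2"
  shows "cond_d q a1 a2 a3 \<longleftrightarrow> Disc q a1 a2 a3 \<le> 0"
proof -
  define X where "X = 9 * real_of_int a1 ^ 2 - real_of_int (24 * a2) + 96 * real q"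
  define m where "m = 1/2 * real_of_int a1 * a2 - 1/8 * real_of_int a1 ^ 3 + real q * a1"
  define r where "r = 1/216 * X powr (3/2)"
  have "X \<ge> 0" using assms unfolding cond_b_def X_def by simp
  have "(X powr (3/2))^2 = X^3"
  proof (cases "X = 0")
    case False
    then have "(X powr (3/2))^2 = X powr (of_nat 2 * (3/2))" by (rule powr_power)
    also have "\<dots> = X^3" using \<open>X \<ge> 0\<close> powr_realpow'[of X 3] by simp
    finally show ?thesis .
  qed simp
  then have r2: "r^2 = X^3 / 46656" unfolding r_def by (simp add: power_divide)
  have "Disc q a1 a2 a3 = ((real_of_int a3 - m)^2 - r^2) / 16"
    unfolding Disc_def u2_def u3_def r2 X_def m_def by (simp add: field_simps power2_eq_square power3_eq_cube)
  then have "Disc q a1 a2 a3 \<le> 0 \<longleftrightarrow> (real_of_int a3 - m)^2 \<le> r^2" by auto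
  also have "\<dots> \<longleftrightarrow> \<bar>real_of_int a3 - m\<bar> \<le> r"
    using abs_le_square_iff[of "real_of_int a3 - m" r] by (simp add: r_def)
  finally have "Disc q a1 a2 a3 \<le> 0 \<longleftrightarrow> \<bar>real_of_int a3 - m\<bar> \<le> r" .
  moreover have "cond_d q a1 a2 a3 \<longleftrightarrow> m - r \<le> real_of_int a3 \<and> real_of_int a3 \<le> m + r"
    unfolding cond_d_def Let_def m_def r_def X_def ..
  ultimately show ?thesis by (auto simp: abs_le_iff)
qed

lemma weil_taylor_values:
  assumes "real q = s^2"
  shows "quartic_deriv3 a1 (2 * s) = 6 * (8 * s + a1)"
    "quartic_deriv3 (- real_of_int a1) (2 * s) = 6 * (8 * s - a1)"
    "quartic_deriv2 a1 (weil_b2 q a2) (2 * s) = 2 * (20 * real q + 6 * s * a1 + a2)"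
    "quartic_deriv2 (- real_of_int a1) (weil_b2 q a2) (2 * s) = 2 * (20 * real q - 6 * s * a1 + a2)"
    "quartic_deriv a1 (weil_b2 q a2) (weil_b3 q a1 a3) (2 * s)
       = 16 * real q * s + 9 * real q * a1 + 4 * s * a2 + a3"
    "quartic_deriv (- real_of_int a1) (weil_b2 q a2) (- weil_b3 q a1 a3) (2 * s)
       = 16 * real q * s - 9 * real q * a1 + 4 * s * a2 - a3"
    "weil_quartic q a1 a2 a3 a4 (2 * s)
       = a4 + 2 * real q * a2 + 2 * real q ^ 2 + 2 * s * (real q * a1 + a3)"
    "weil_quartic_reflected q a1 a2 a3 a4 (2 * s)
       = a4 + 2 * real q * a2 + 2 * real q ^ 2 - 2 * s * (real q * a1 + a3)"
  unfolding quartic_def quartic_deriv_def quartic_deriv2_def quartic_deriv3_def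
    weil_b2_def weil_b3_def weil_b4_def assms by algebra+

lemma weil_taylor_nonneg_iff:
  assumes "s = sqrt (real q)"
  shows "taylor_nonneg_at a1 (weil_b2 q a2) (weil_b3 q a1 a3) (weil_b4 q a2 a4) (2 * s) \<and>
      taylor_nonneg_at (- real_of_int a1) (weil_b2 q a2) (- weil_b3 q a1 a3) (weil_b4 q a2 a4) (2 * s) \<longleftrightarrow>
    cond_a q a1 \<and> cond_bstar q a1 a2 \<and> cond_c q a1 a2 a3 \<and> cond_e q a1 a2 a3 a4"
proof -
  have s: "s \<ge> 0" "real q = s^2" using assms by simp_all
  have "6 * s * \<bar>real_of_int a1\<bar> = \<bar>6 * s * a1\<bar>"
    "2 * s * \<bar>real q * a1 + a3\<bar> = \<bar>2 * s * (real q * a1 + a3)\<bar>"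
    using s by (simp_all add: abs_mult)
  then show ?thesis
    unfolding taylor_nonneg_at_def weil_taylor_values[OF s(2)] cond_a_def cond_bstar_def cond_c_def
      cond_e_def assms[symmetric]
    by (auto simp: abs_le_iff)
qed

lemma hpoly_in_W_iff_real_rooted:
  "hpoly q a1 a2 a3 a4 \<in> W q 4 \<longleftrightarrow>
    (\<exists>t1 t2 t3 t4. quartic_roots a1 (weil_b2 q a2) (weil_b3 q a1 a3) (weil_b4 q a2 a4) t1 t2 t3 t4) \<and>
    cond_a q a1 \<and> cond_bstar q a1 a2 \<and> cond_c q a1 a2 a3 \<and> cond_e q a1 a2 a3 a4"
  (is "_ \<longleftrightarrow> (\<exists>t1 t2 t3 t4. ?roots t1 t2 t3 t4) \<and> ?conds")
proof -
  have "(\<forall>t\<in>{t1, t2, t3, t4}. \<bar>t\<bar> \<le> 2 * sqrt (real q)) \<longleftrightarrow> ?conds"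
    if "?roots t1 t2 t3 t4" for t1 t2 t3 t4
    using quartic_roots_bounded_iff_taylor_nonneg[OF that] weil_taylor_nonneg_iff[OF refl] by blast
  then show ?thesis unfolding hpoly_in_W_iff_bounded_roots by blast
qed

section \<open>The set S and condition (f)\<close>

lemma admissible_cardano_data:
  assumes "Disc q a1 a2 a3 \<le> 0" "admissible q a1 a2 a3 \<zeta> sD om"
  shows "\<zeta>^3 = 1" "\<zeta> \<noteq> 1"
    "sD^2 = complex_of_real (u3 q a1 a2 a3 ^ 2 + 4 * u2 q a1 a2 ^ 3 / 27)"
    "u3 q a1 a2 a3 ^ 2 + 4 * u2 q a1 a2 ^ 3 / 27 \<le> 0"
    "om^3 = (- complex_of_real (u3 q a1 a2 a3) + sD) / 2"
  using assms by (auto simp: admissible_def Disc_def)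

lemma S_elem_eq:
  assumes "Disc q a1 a2 a3 \<le> 0" "admissible q a1 a2 a3 \<zeta> sD om"
  shows "S_elem q a1 a2 a3 \<zeta> sD om k = complex_of_real (weil_quartic q a1 a2 a3 a4 (- a1 / 4)
    - weil_quartic q a1 a2 a3 a4 (cardano_root \<zeta> om k - a1 / 4))"
proof -
  let ?y = "cardano_root \<zeta> om k"
  have "S_elem q a1 a2 a3 \<zeta> sD om k = complex_of_real
      (- (?y^4 + 2 * u2 q a1 a2 * ?y^2 - 4 * u3 q a1 a2 a3 * ?y))"
    unfolding S_elem_def Let_def by (rule cardano_S_term[OF admissible_cardano_data[OF assms]])
  then show ?thesis by (simp add: quartic_depressed u2_eq_deriv_u2 u3_eq_deriv_u3)
qed

lemma S_elem_real:
  assumes "Disc q a1 a2 a3 \<le> 0" "admissible q a1 a2 a3 \<zeta> sD om"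
  shows "S_elem q a1 a2 a3 \<zeta> sD om k \<in> \<real>"
  unfolding S_elem_eq[OF assms, of _ 0] by simp

lemma cardano_deriv_roots:
  assumes "Disc q a1 a2 a3 \<le> 0" "admissible q a1 a2 a3 \<zeta> sD om"
  shows "deriv_roots a1 (weil_b2 q a2) (weil_b3 q a1 a3) (cardano_root \<zeta> om 0 - a1 / 4)
    (cardano_root \<zeta> om 1 - a1 / 4) (cardano_root \<zeta> om 2 - a1 / 4)"
proof -
  note vieta = cardano_roots_vieta[OF admissible_cardano_data[OF assms]]
  show ?thesis
    using vieta unfolding deriv_roots_iff_vieta u2_eq_deriv_u2 u3_eq_deriv_u3 deriv_u2_def deriv_u3_def
    by (intro conjI) algebra+
qed

lemma admissible_exists: "\<exists>\<zeta> sD om. admissible q a1 a2 a3 \<zeta> sD om"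
proof -
  define \<zeta> where "\<zeta> = Complex (- 1 / 2) (sqrt 3 / 2)"
  have "sqrt 3 * sqrt 3 = (3 :: real)" by simp
  then have "\<zeta>^3 = 1" "\<zeta> \<noteq> 1"
    unfolding \<zeta>_def by (simp_all add: power3_eq_cube complex_eq_iff field_simps)
  moreover define sD where "sD = csqrt (complex_of_real (Disc q a1 a2 a3))"
  have "sD^2 = complex_of_real (Disc q a1 a2 a3)" by (simp add: sD_def)
  moreover obtain om where "om^3 = (- complex_of_real (u3 q a1 a2 a3) + sD) / 2"
  proof (cases "(- complex_of_real (u3 q a1 a2 a3) + sD) / 2 = 0")
    case False
    then show thesis
      using that[of "exp (Ln ((- complex_of_real (u3 q a1 a2 a3) + sD) / 2) / 3)"]
      by (simp flip: exp_of_nat_mult)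
  qed (use that in simp)
  ultimately show ?thesis unfolding admissible_def by blast
qed

lemma sort3_bounds:
  fixes x0 x1 x2 c :: real
  shows "sort [x0, x1, x2] ! 0 \<le> c \<longleftrightarrow> x0 \<le> c \<or> x1 \<le> c \<or> x2 \<le> c"
    and "c \<le> sort [x0, x1, x2] ! 1 \<longleftrightarrow> c \<le> x0 \<and> c \<le> x1 \<or> c \<le> x0 \<and> c \<le> x2 \<or> c \<le> x1 \<and> c \<le> x2"
  by (auto simp: insort_is_Cons split: if_splits)

lemma cond_f_iff_crit_sign_pattern:
  assumes "Disc q a1 a2 a3 \<le> 0" "admissible q a1 a2 a3 \<zeta> sD om"
  shows "cond_f q a1 a2 a3 a4 \<zeta> sD om \<longleftrightarrow> crit_sign_pattern
    (weil_quartic q a1 a2 a3 a4 (cardano_root \<zeta> om 0 - a1 / 4))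
    (weil_quartic q a1 a2 a3 a4 (cardano_root \<zeta> om 1 - a1 / 4))
    (weil_quartic q a1 a2 a3 a4 (cardano_root \<zeta> om 2 - a1 / 4))"
proof -
  define c where "c = 3/256 * real_of_int a1 ^ 4 - 1/16 * real_of_int a1 ^ 2 * a2 - 1/2 * real q * a1 ^ 2
    + 1/4 * real_of_int a1 * a3 + 2 * real q * a2 - 2 * real q ^ 2"
  have "weil_quartic q a1 a2 a3 a4 (- a1 / 4) = a4 - c"
    unfolding c_def quartic_def weil_b2_def weil_b3_def weil_b4_def
    by (simp add: field_simps power2_eq_square power3_eq_cube power4_eq_xxxx)
  then have theta: "Re (S_elem q a1 a2 a3 \<zeta> sD om k)
      = (a4 - c) - weil_quartic q a1 a2 a3 a4 (cardano_root \<zeta> om k - a1 / 4)" for k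
    by (simp add: S_elem_eq[OF assms, of _ a4])
  have "cond_f q a1 a2 a3 a4 \<zeta> sD om \<longleftrightarrow>
      thetas q a1 a2 a3 \<zeta> sD om ! 0 \<le> a4 - c \<and> a4 - c \<le> thetas q a1 a2 a3 \<zeta> sD om ! 1"
    unfolding cond_f_def Let_def c_def by linarith
  moreover have "thetas q a1 a2 a3 \<zeta> sD om = sort [Re (S_elem q a1 a2 a3 \<zeta> sD om 0),
      Re (S_elem q a1 a2 a3 \<zeta> sD om 1), Re (S_elem q a1 a2 a3 \<zeta> sD om 2)]"
    by (simp add: thetas_def)
  ultimately show ?thesis
    unfolding sort3_bounds theta crit_sign_pattern_def by auto
qed

lemma weil_quartic_real_rooted_iff:
  "(\<exists>t1 t2 t3 t4. quartic_roots a1 (weil_b2 q a2) (weil_b3 q a1 a3) (weil_b4 q a2 a4) t1 t2 t3 t4) \<longleftrightarrow>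
    cond_b q a1 a2 \<and> cond_d q a1 a2 a3 \<and>
    (\<forall>\<zeta> sD om. admissible q a1 a2 a3 \<zeta> sD om \<longrightarrow> cond_f q a1 a2 a3 a4 \<zeta> sD om)"
proof
  assume "\<exists>t1 t2 t3 t4. quartic_roots a1 (weil_b2 q a2) (weil_b3 q a1 a3) (weil_b4 q a2 a4) t1 t2 t3 t4"
  then obtain t1 t2 t3 t4
    where roots: "quartic_roots a1 (weil_b2 q a2) (weil_b3 q a1 a3) (weil_b4 q a2 a4) t1 t2 t3 t4"
    by blast
  have b: "cond_b q a1 a2" using quartic_roots_coeff_bound[OF roots] by (simp add: cond_b_iff)
  have disc: "Disc q a1 a2 a3 \<le> 0"
    using quartic_roots_deriv_disc_nonpos[OF roots] by (simp add: Disc_eq_deriv_disc)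
  have "cond_f q a1 a2 a3 a4 \<zeta> sD om" if "admissible q a1 a2 a3 \<zeta> sD om" for \<zeta> sD om
    using roots real_rooted_iff_crit_sign_pattern[OF cardano_deriv_roots[OF disc that]]
      cond_f_iff_crit_sign_pattern[OF disc that] by blast
  with b disc cond_d_iff[OF b]
  show "cond_b q a1 a2 \<and> cond_d q a1 a2 a3 \<and>
    (\<forall>\<zeta> sD om. admissible q a1 a2 a3 \<zeta> sD om \<longrightarrow> cond_f q a1 a2 a3 a4 \<zeta> sD om)" by blast
next
  assume conds: "cond_b q a1 a2 \<and> cond_d q a1 a2 a3 \<and>
    (\<forall>\<zeta> sD om. admissible q a1 a2 a3 \<zeta> sD om \<longrightarrow> cond_f q a1 a2 a3 a4 \<zeta> sD om)"
  then have disc: "Disc q a1 a2 a3 \<le> 0" using cond_d_iff by blast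
  obtain \<zeta> sD om where adm: "admissible q a1 a2 a3 \<zeta> sD om" using admissible_exists by blast
  with conds have "cond_f q a1 a2 a3 a4 \<zeta> sD om" by blast
  then show "\<exists>t1 t2 t3 t4. quartic_roots a1 (weil_b2 q a2) (weil_b3 q a1 a3) (weil_b4 q a2 a4) t1 t2 t3 t4"
    using real_rooted_iff_crit_sign_pattern[OF cardano_deriv_roots[OF disc adm]]
      cond_f_iff_crit_sign_pattern[OF disc adm] by blast
qed

lemma Disc_nonpos_if_W_or_conds:
  assumes "hpoly q a1 a2 a3 a4 \<in> W q 4 \<or> (cond_a q a1 \<and> cond_bstar q a1 a2 \<and> cond_b q a1 a2 \<and>
    cond_c q a1 a2 a3 \<and> cond_d q a1 a2 a3)"
  shows "Disc q a1 a2 a3 \<le> 0"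
proof (cases "hpoly q a1 a2 a3 a4 \<in> W q 4")
  case True
  then obtain t1 t2 t3 t4
    where "quartic_roots a1 (weil_b2 q a2) (weil_b3 q a1 a3) (weil_b4 q a2 a4) t1 t2 t3 t4"
    unfolding hpoly_in_W_iff_real_rooted by blast
  from quartic_roots_deriv_disc_nonpos[OF this] show ?thesis by (simp add: Disc_eq_deriv_disc)
next
  case False
  with assms show ?thesis using cond_d_iff by blast
qed

section \<open>Real roots\<close>

lemma abs_eq_iff_of_bounds:
  fixes A B :: real
  assumes "0 \<le> B + A" "0 \<le> B - A"
  shows "\<bar>A\<bar> = B \<longleftrightarrow> B + A = 0 \<or> B - A = 0"
  using assms by (auto simp: abs_if)

definition weil_bound_attained :: "nat \<Rightarrow> int \<Rightarrow> int \<Rightarrow> int \<Rightarrow> int \<Rightarrow> bool" where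
  "weil_bound_attained q a1 a2 a3 a4 \<longleftrightarrow>
     \<bar>real_of_int a1\<bar> = 8 * sqrt q
     \<or> 6 * sqrt q * \<bar>real_of_int a1\<bar> - 20 * real q = real_of_int a2
     \<or> - 9 * real q * a1 - 4 * sqrt q * a2 - 16 * real q * sqrt q = real_of_int a3
     \<or> real_of_int a3 = - 9 * real q * a1 + 4 * sqrt q * a2 + 16 * real q * sqrt q
     \<or> 2 * sqrt q * \<bar>real q * a1 + a3\<bar> - 2 * real q * a2 - 2 * real q ^ 2 = real_of_int a4"

lemma weil_bound_attained_iff:
  assumes s_def: "s = sqrt (real q)"
    and conds: "cond_a q a1" "cond_bstar q a1 a2" "cond_c q a1 a2 a3" "cond_e q a1 a2 a3 a4"
  shows "weil_bound_attained q a1 a2 a3 a4 \<longleftrightarrow>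
    taylor_vanishes_at a1 (weil_b2 q a2) (weil_b3 q a1 a3) (weil_b4 q a2 a4) (2 * s) \<or>
    taylor_vanishes_at (- real_of_int a1) (weil_b2 q a2) (- weil_b3 q a1 a3) (weil_b4 q a2 a4) (2 * s)"
proof -
  have s: "s \<ge> 0" "real q = s^2" using s_def by simp_all
  have "taylor_nonneg_at a1 (weil_b2 q a2) (weil_b3 q a1 a3) (weil_b4 q a2 a4) (2 * s)"
    "taylor_nonneg_at (- real_of_int a1) (weil_b2 q a2) (- weil_b3 q a1 a3) (weil_b4 q a2 a4) (2 * s)"
    using weil_taylor_nonneg_iff[OF s_def] conds by blast+
  note nonneg = this[unfolded taylor_nonneg_at_def weil_taylor_values[OF s(2)]]
  have "\<bar>real_of_int a1\<bar> = 8 * s \<longleftrightarrow> 6 * (8 * s + a1) = 0 \<or> 6 * (8 * s - a1) = 0"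
    using abs_eq_iff_of_bounds[of "8 * s" a1] nonneg by auto
  moreover have "6 * s * \<bar>real_of_int a1\<bar> - 20 * real q = a2 \<longleftrightarrow>
      2 * (20 * real q + 6 * s * a1 + a2) = 0 \<or> 2 * (20 * real q - 6 * s * a1 + a2) = 0"
    using abs_eq_iff_of_bounds[of "a2 + 20 * real q" "6 * s * a1"] nonneg s(1) by (auto simp: abs_mult)
  moreover have "- 9 * real q * a1 - 4 * s * a2 - 16 * real q * s = a3 \<longleftrightarrow>
      16 * real q * s + 9 * real q * a1 + 4 * s * a2 + a3 = 0"
    "real_of_int a3 = - 9 * real q * a1 + 4 * s * a2 + 16 * real q * s \<longleftrightarrow>
      16 * real q * s - 9 * real q * a1 + 4 * s * a2 - a3 = 0"
    by (intro iffI; linarith)+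
  moreover have "2 * s * \<bar>real q * a1 + a3\<bar> - 2 * real q * a2 - 2 * real q ^ 2 = a4 \<longleftrightarrow>
      a4 + 2 * real q * a2 + 2 * real q ^ 2 + 2 * s * (real q * a1 + a3) = 0 \<or>
      a4 + 2 * real q * a2 + 2 * real q ^ 2 - 2 * s * (real q * a1 + a3) = 0"
    using abs_eq_iff_of_bounds[of "a4 + 2 * real q * a2 + 2 * real q ^ 2" "2 * s * (real q * a1 + a3)"]
      nonneg s(1) by (auto simp: abs_mult)
  ultimately show ?thesis
    unfolding weil_bound_attained_def taylor_vanishes_at_def weil_taylor_values[OF s(2)] s_def [symmetric]
    by blast
qed

lemma hpoly_real_root_iff_quartic_zero:
  assumes "q > 0"
    and roots: "quartic_roots a1 (weil_b2 q a2) (weil_b3 q a1 a3) (weil_b4 q a2 a4) t1 t2 t3 t4"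
    and bounded: "\<forall>t\<in>{t1, t2, t3, t4}. \<bar>t\<bar> \<le> 2 * sqrt (real q)"
  shows "(\<exists>x::real. poly (map_poly of_int (hpoly q a1 a2 a3 a4)) x = 0) \<longleftrightarrow>
    weil_quartic q a1 a2 a3 a4 (2 * sqrt (real q)) = 0 \<or>
    weil_quartic q a1 a2 a3 a4 (- 2 * sqrt (real q)) = 0"
proof
  define s where "s = sqrt (real q)"
  have s: "s > 0" "real q = s^2" using \<open>q > 0\<close> by (simp_all add: s_def)
  assume "\<exists>x::real. poly (map_poly of_int (hpoly q a1 a2 a3 a4)) x = 0"
  then obtain x :: real where x: "poly (map_poly of_int (hpoly q a1 a2 a3 a4)) x = 0" by blast
  have "x \<noteq> 0" using x \<open>q > 0\<close> by (auto simp: hpoly_def map_poly_pCons)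
  define y where "y = x + real q / x"
  have "weil_quartic q a1 a2 a3 a4 y = 0" using x hpoly_eval[OF \<open>x \<noteq> 0\<close>] \<open>x \<noteq> 0\<close> by (simp add: y_def)
  then have "y \<in> {t1, t2, t3, t4}" by (auto simp: quartic_roots_eval[OF roots])
  then have "\<bar>y\<bar> \<le> \<bar>2 * s\<bar>" using bounded by (auto simp: s_def)
  then have "y^2 \<le> (2 * s)^2" by (simp only: abs_le_square_iff)
  moreover have "y^2 - (2 * s)^2 = (x - real q / x)^2"
    unfolding y_def using \<open>x \<noteq> 0\<close> s(2) by (simp add: field_simps power2_eq_square)
  ultimately have "y^2 = (2 * s)^2" using zero_le_power2[of "x - real q / x"] by linarith
  then have "y = 2 * s \<or> y = - 2 * s" by (simp only: power2_eq_iff) simp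
  with \<open>weil_quartic q a1 a2 a3 a4 y = 0\<close>
  show "weil_quartic q a1 a2 a3 a4 (2 * sqrt (real q)) = 0 \<or>
    weil_quartic q a1 a2 a3 a4 (- 2 * sqrt (real q)) = 0" by (auto simp: s_def)
next
  define s where "s = sqrt (real q)"
  have s: "s > 0" "real q = s^2" using \<open>q > 0\<close> by (simp_all add: s_def)
  then have "s + real q / s = 2 * s" "- s + real q / (- s) = - 2 * s"
    by (simp_all add: field_simps power2_eq_square)
  then have "poly (map_poly of_int (hpoly q a1 a2 a3 a4)) s = s^4 * weil_quartic q a1 a2 a3 a4 (2 * s)"
    "poly (map_poly of_int (hpoly q a1 a2 a3 a4)) (- s) = s^4 * weil_quartic q a1 a2 a3 a4 (- 2 * s)"
    using hpoly_eval[of s] hpoly_eval[of "- s"] s(1) by simp_all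
  moreover assume "weil_quartic q a1 a2 a3 a4 (2 * sqrt (real q)) = 0 \<or>
    weil_quartic q a1 a2 a3 a4 (- 2 * sqrt (real q)) = 0"
  ultimately show "\<exists>x::real. poly (map_poly of_int (hpoly q a1 a2 a3 a4)) x = 0"
    unfolding s_def by auto
qed

lemma hpoly_real_root_iff_bound_attained:
  assumes "q > 0" and W: "hpoly q a1 a2 a3 a4 \<in> W q 4"
  shows "(\<exists>x::real. poly (map_poly of_int (hpoly q a1 a2 a3 a4)) x = 0) \<longleftrightarrow>
    weil_bound_attained q a1 a2 a3 a4"
proof -
  define s where "s = sqrt (real q)"
  obtain t1 t2 t3 t4
    where roots: "quartic_roots a1 (weil_b2 q a2) (weil_b3 q a1 a3) (weil_b4 q a2 a4) t1 t2 t3 t4"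
      and bounded: "\<forall>t\<in>{t1, t2, t3, t4}. \<bar>t\<bar> \<le> 2 * s"
    using W unfolding hpoly_in_W_iff_bounded_roots s_def by blast
  have conds: "cond_a q a1" "cond_bstar q a1 a2" "cond_c q a1 a2 a3" "cond_e q a1 a2 a3 a4"
    using W unfolding hpoly_in_W_iff_real_rooted by blast+
  have le: "t1 \<le> 2 * s" "t2 \<le> 2 * s" "t3 \<le> 2 * s" "t4 \<le> 2 * s"
    and le': "- t1 \<le> 2 * s" "- t2 \<le> 2 * s" "- t3 \<le> 2 * s" "- t4 \<le> 2 * s"
    using bounded by (simp_all add: abs_le_iff)
  have "weil_quartic q a1 a2 a3 a4 (2 * s) = 0 \<longleftrightarrow>
      taylor_vanishes_at a1 (weil_b2 q a2) (weil_b3 q a1 a3) (weil_b4 q a2 a4) (2 * s)"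
    using quartic_zero_of_taylor_vanishes[OF roots le] by (auto simp: taylor_vanishes_at_def)
  moreover have "weil_quartic_reflected q a1 a2 a3 a4 (2 * s) = 0 \<longleftrightarrow>
      taylor_vanishes_at (- real_of_int a1) (weil_b2 q a2) (- weil_b3 q a1 a3) (weil_b4 q a2 a4) (2 * s)"
    using quartic_zero_of_taylor_vanishes[OF quartic_roots_reflect[OF roots] le']
    by (auto simp: taylor_vanishes_at_def)
  ultimately show ?thesis
    using hpoly_real_root_iff_quartic_zero[OF \<open>q > 0\<close> roots bounded[unfolded s_def]]
      weil_bound_attained_iff[OF s_def conds] quartic_reflect[of a1 "weil_b2 q a2"]
    unfolding s_def by auto
qed

lemma poly_of_int_at_quadratic_irrational:
  fixes p :: "int poly" and x :: real
  assumes "x^2 = real q"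
  shows "\<exists>(e :: int) (f :: int). poly (map_poly of_int p) x = e + f * x \<and> poly (map_poly of_int p) (- x) = e - f * x"
proof (induction p rule: pCons_induct)
  case (pCons a p)
  then obtain e f :: int where ef: "poly (map_poly of_int p) x = e + f * x"
    "poly (map_poly of_int p) (- x) = e - f * x" by blast
  have "poly (map_poly of_int (pCons a p)) x = (a + f * int q) + e * x"
    "poly (map_poly of_int (pCons a p)) (- x) = (a + f * int q) - e * x"
    using assms by (simp_all add: map_poly_pCons ef algebra_simps power2_eq_square)
  then show ?case by blast
qed (intro exI[of _ 0]; simp)

lemma nonsquare_sqrt_irrational:
  fixes e f :: int and x :: real
  assumes nonsquare: "\<nexists>m::nat. q = m^2" and x: "x^2 = real q" and "real_of_int e + real_of_int f * x = 0"
  shows "f = 0"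
proof (rule ccontr)
  assume "f \<noteq> 0"
  have "real_of_int e = - (f * x)" using assms(3) by linarith
  then have "real_of_int (e^2) = real_of_int (int q * f^2)" using x by (simp add: power_mult_distrib)
  then have "int q * f^2 = e^2" by (simp only: of_int_eq_iff)
  define a where "a = nat \<bar>f\<bar>"
  define b where "b = nat \<bar>e\<bar>"
  have "int (q * a^2) = int (b^2)" using \<open>int q * f^2 = e^2\<close> by (simp add: a_def b_def power2_abs)
  then have ab: "q * a^2 = b^2" by (simp only: of_nat_eq_iff)
  then have "a^2 dvd b^2" by (metis dvd_triv_right)
  then have "a dvd b" by simp
  then obtain k where "b = a * k" by blast
  moreover have "a > 0" using \<open>f \<noteq> 0\<close> by (simp add: a_def)
  ultimately have "q = k^2" using ab by (simp add: power_mult_distrib)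
  with nonsquare show False by blast
qed

lemma neg_root_of_nonsquare:
  assumes "\<nexists>m::nat. q = m^2" "x^2 = real q" "poly (map_poly of_int p) x = 0"
  shows "poly (map_poly of_int p) (- x) = 0"
proof -
  obtain e f :: int where ef: "poly (map_poly of_int p) x = e + f * x" "poly (map_poly of_int p) (- x) = e - f * x"
    using poly_of_int_at_quadratic_irrational[OF assms(2)] by blast
  then have "f = 0" using nonsquare_sqrt_irrational[OF assms(1,2)] assms(3) by simp
  then show ?thesis using ef assms(3) by simp
qed

lemma conj_pairs_of_square_root:
  assumes "x^2 = real q"
  shows "map_poly of_int ([:- int q, 0, 1:]^2) = (\<Prod>w\<leftarrow>[complex_of_real x, complex_of_real (- x)]. conj_pair w)"
proof -
  have "(\<Prod>w\<leftarrow>[complex_of_real x, complex_of_real (- x)]. conj_pair w)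
      = ([:- complex_of_real x, 1:] * [:complex_of_real x, 1:])^2"
    by (simp add: conj_pair_def power2_eq_square mult_ac)
  also have "\<dots> = [:- of_nat q, 0, 1:]^2"
    using assms by (simp add: power2_eq_square flip: of_real_mult)
  also have "\<dots> = map_poly of_int ([:- int q, 0, 1:]^2)"
    by (simp add: map_poly_of_int_power map_poly_pCons)
  finally show ?thesis ..
qed

lemma real_root_factor_square:
  fixes h :: "int poly" and x :: real
  assumes m: "q = m^2" and "g \<ge> 2" and ws: "length ws = g" "\<forall>w\<in>set ws. cmod w = sqrt (real q)"
    "map_poly of_int h = (\<Prod>w\<leftarrow>ws. conj_pair w)"
    and x: "poly (map_poly of_int h) x = 0"
  shows "\<exists>h0. h0 \<in> W q (g - 1) \<and> (h = [:int m, 1:]^2 * h0 \<or> h = [:- int m, 1:]^2 * h0)"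
proof -
  have x_in: "complex_of_real x \<in> set ws" by (rule real_root_in_conj_pairs[OF ws(3) x])
  then have "\<bar>x\<bar> = m" using ws(2) m by force
  then have "x = m \<or> x = - real m" by linarith
  then obtain k :: int where k: "x = k" "k = m \<or> k = - int m" by (metis of_int_minus of_int_of_nat_eq)
  have d: "lead_coeff ([:- k, 1:]^2) = 1"
    "map_poly of_int ([:- k, 1:]^2) = (\<Prod>w\<leftarrow>[complex_of_real x]. conj_pair w)"
    by (simp_all add: lead_coeff_power k map_poly_of_int_power map_poly_pCons conj_pair_def power2_eq_square)
  have "mset [complex_of_real x] \<subseteq># mset ws" using x_in by simp
  moreover have "g - 1 > 0" "length ws = length [complex_of_real x] + (g - 1)" using assms ws(1) by auto
  ultimately obtain h0 where "h0 \<in> W q (g - 1)" "h = [:- k, 1:]^2 * h0"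
    using W_divide_conj_pairs[OF _ _ ws(2,3) _ d] by blast
  with k(2) show ?thesis by auto
qed

lemma real_root_factor_nonsquare:
  fixes h :: "int poly" and x :: real
  assumes nonsquare: "\<nexists>m::nat. q = m^2" and "g \<ge> 3"
    and ws: "length ws = g" "\<forall>w\<in>set ws. cmod w = sqrt (real q)" "map_poly of_int h = (\<Prod>w\<leftarrow>ws. conj_pair w)"
    and x: "poly (map_poly of_int h) x = 0"
  shows "\<exists>h0. h0 \<in> W q (g - 2) \<and> h = [:- int q, 0, 1:]^2 * h0"
proof -
  have x_in: "complex_of_real x \<in> set ws" by (rule real_root_in_conj_pairs[OF ws(3) x])
  then have "\<bar>x\<bar> = sqrt (real q)" using ws(2) by force
  then have "x^2 = (sqrt (real q))^2" by (metis power2_abs)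
  then have x2: "x^2 = real q" by simp
  have "poly (map_poly of_int h) (- x) = 0" by (rule neg_root_of_nonsquare[OF nonsquare x2 x])
  then have "complex_of_real (- x) \<in> set ws" by (rule real_root_in_conj_pairs[OF ws(3)])
  moreover have "x \<noteq> 0" using x2 nonsquare by (metis of_nat_eq_0_iff power_zero_numeral zero_power2)
  ultimately have "mset [complex_of_real x, complex_of_real (- x)] \<subseteq># mset ws"
    using x_in by (simp add: insert_subset_eq_iff in_diff_count)
  moreover have "map_poly of_int ([:- int q, 0, 1:]^2)
      = (\<Prod>w\<leftarrow>[complex_of_real x, complex_of_real (- x)]. conj_pair w)"
    by (rule conj_pairs_of_square_root[OF x2])
  moreover have "lead_coeff ([:- int q, 0, 1:]^2) = 1" by (simp add: lead_coeff_power)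
  moreover have "g - 2 > 0" "length ws = length [complex_of_real x, complex_of_real (- x)] + (g - 2)"
    using assms ws(1) by auto
  ultimately show ?thesis using W_divide_conj_pairs[OF _ _ ws(2,3)] by metis
qed

lemma W_square_factor:
  assumes m: "q = m^2" and k: "k = m \<or> k = - int m" and h0: "h0 \<in> W q (g - 1)" and "g \<ge> 2"
  shows "[:- k, 1:]^2 * h0 \<in> W q g" "poly (map_poly of_int ([:- k, 1:]^2 * h0)) (real_of_int k) = 0"
proof -
  have "map_poly of_int ([:- k, 1:]^2) = (\<Prod>w\<leftarrow>[complex_of_int k]. conj_pair w)"
    by (simp add: map_poly_of_int_power map_poly_pCons conj_pair_def power2_eq_square)
  moreover have "\<forall>w\<in>set [complex_of_int k]. cmod w = sqrt (real q)" using m k by auto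
  ultimately have "[:- k, 1:]^2 * h0 \<in> W q (length [complex_of_int k] + (g - 1))"
    by (rule W_mult_conj_pairs[OF h0])
  then show "[:- k, 1:]^2 * h0 \<in> W q g" using \<open>g \<ge> 2\<close> by simp
  show "poly (map_poly of_int ([:- k, 1:]^2 * h0)) (real_of_int k) = 0"
    by (simp add: map_poly_of_int_mult map_poly_of_int_power map_poly_pCons)
qed

lemma W_nonsquare_factor:
  assumes h0: "h0 \<in> W q (g - 2)" and "g \<ge> 3"
  shows "[:- int q, 0, 1:]^2 * h0 \<in> W q g"
    "poly (map_poly of_int ([:- int q, 0, 1:]^2 * h0)) (sqrt (real q)) = 0"
proof -
  define r where "r = sqrt (real q)"
  have "map_poly of_int ([:- int q, 0, 1:]^2)
      = (\<Prod>w\<leftarrow>[complex_of_real r, complex_of_real (- r)]. conj_pair w)"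
    by (rule conj_pairs_of_square_root) (simp add: r_def)
  moreover have "\<forall>w\<in>set [complex_of_real r, complex_of_real (- r)]. cmod w = sqrt (real q)"
    by (simp add: r_def)
  ultimately have "[:- int q, 0, 1:]^2 * h0 \<in> W q (length [complex_of_real r, complex_of_real (- r)] + (g - 2))"
    by (rule W_mult_conj_pairs[OF h0])
  moreover have "length [complex_of_real r, complex_of_real (- r)] + (g - 2) = g" using \<open>g \<ge> 3\<close> by simp
  ultimately show "[:- int q, 0, 1:]^2 * h0 \<in> W q g" by simp
  show "poly (map_poly of_int ([:- int q, 0, 1:]^2 * h0)) (sqrt (real q)) = 0"
    by (simp add: map_poly_of_int_mult map_poly_of_int_power map_poly_pCons)
qed

lemma W_real_root_iff:
  fixes h :: "int poly"
  assumes "g \<ge> 3"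
  shows "(h \<in> W q g \<and> (\<exists>x::real. poly (map_poly of_int h) x = 0)) \<longleftrightarrow>
    ((\<exists>m::nat. q = m^2 \<and> (\<exists>h0. h0 \<in> W q (g - 1) \<and>
        (h = [:int m, 1:]^2 * h0 \<or> h = [:- int m, 1:]^2 * h0)))
     \<or> ((\<nexists>m::nat. q = m^2) \<and> (\<exists>h0. h0 \<in> W q (g - 2) \<and> h = [:- int q, 0, 1:]^2 * h0)))"
proof
  assume "h \<in> W q g \<and> (\<exists>x::real. poly (map_poly of_int h) x = 0)"
  then obtain ws and x :: real where ws: "length ws = g" "\<forall>w\<in>set ws. cmod w = sqrt (real q)"
      "map_poly of_int h = (\<Prod>w\<leftarrow>ws. conj_pair w)"
    and x: "poly (map_poly of_int h) x = 0"
    using assms by (auto simp: W_iff_conj_pairs)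
  show "(\<exists>m::nat. q = m^2 \<and> (\<exists>h0. h0 \<in> W q (g - 1) \<and>
        (h = [:int m, 1:]^2 * h0 \<or> h = [:- int m, 1:]^2 * h0)))
     \<or> ((\<nexists>m::nat. q = m^2) \<and> (\<exists>h0. h0 \<in> W q (g - 2) \<and> h = [:- int q, 0, 1:]^2 * h0))"
  proof (cases "\<exists>m::nat. q = m^2")
    case True
    then obtain m where "q = m^2" by blast
    with real_root_factor_square[OF this _ ws x] assms show ?thesis by auto
  next
    case False
    with real_root_factor_nonsquare[OF False assms ws x] show ?thesis by blast
  qed
next
  assume "(\<exists>m::nat. q = m^2 \<and> (\<exists>h0. h0 \<in> W q (g - 1) \<and>
        (h = [:int m, 1:]^2 * h0 \<or> h = [:- int m, 1:]^2 * h0)))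
     \<or> ((\<nexists>m::nat. q = m^2) \<and> (\<exists>h0. h0 \<in> W q (g - 2) \<and> h = [:- int q, 0, 1:]^2 * h0))"
  then show "h \<in> W q g \<and> (\<exists>x::real. poly (map_poly of_int h) x = 0)"
  proof
    assume "\<exists>m::nat. q = m^2 \<and> (\<exists>h0. h0 \<in> W q (g - 1) \<and>
        (h = [:int m, 1:]^2 * h0 \<or> h = [:- int m, 1:]^2 * h0))"
    then obtain m :: nat and k :: int and h0 where "q = m^2" "k = m \<or> k = - int m"
      and "h0 \<in> W q (g - 1)" and h: "h = [:- k, 1:]^2 * h0"
      by (metis minus_minus)
    from W_square_factor[OF this(1-3)] assms show ?thesis unfolding h by auto
  next
    assume "(\<nexists>m::nat. q = m^2) \<and> (\<exists>h0. h0 \<in> W q (g - 2) \<and> h = [:- int q, 0, 1:]^2 * h0)"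
    then obtain h0 where "h0 \<in> W q (g - 2)" and h: "h = [:- int q, 0, 1:]^2 * h0" by blast
    from W_nonsquare_factor[OF this(1) assms] show ?thesis unfolding h by blast
  qed
qed

theorem theoremB:
  fixes p n q :: nat and a1 a2 a3 a4 :: int
  assumes "prime p" and "n \<ge> 1" and "q = p ^ n"
  defines "h \<equiv> hpoly q a1 a2 a3 a4"
  shows
    "((h \<in> W q 4 \<or> (cond_a q a1 \<and> cond_bstar q a1 a2 \<and> cond_b q a1 a2 \<and>
                      cond_c q a1 a2 a3 \<and> cond_d q a1 a2 a3)) \<longrightarrow>
        (\<forall>\<zeta> sD om. admissible q a1 a2 a3 \<zeta> sD om \<longrightarrow>
           (\<forall>k\<in>{0, 1, 2}. S_elem q a1 a2 a3 \<zeta> sD om k \<in> \<real>)))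
     \<and> (h \<in> W q 4 \<longleftrightarrow>
          (cond_a q a1 \<and> cond_bstar q a1 a2 \<and> cond_b q a1 a2 \<and> cond_c q a1 a2 a3 \<and>
           cond_d q a1 a2 a3 \<and> cond_e q a1 a2 a3 a4 \<and>
           (\<forall>\<zeta> sD om. admissible q a1 a2 a3 \<zeta> sD om \<longrightarrow> cond_f q a1 a2 a3 a4 \<zeta> sD om)))
     \<and> (h \<in> W q 4 \<longrightarrow>
          ((\<exists>x::real. poly (map_poly of_int h) x = 0) \<longleftrightarrow>
           (\<bar>real_of_int a1\<bar> = 8 * sqrt q
            \<or> 6 * sqrt q * \<bar>real_of_int a1\<bar> - 20 * real q = real_of_int a2
            \<or> - 9 * real q * a1 - 4 * sqrt q * a2 - 16 * real q * sqrt q = real_of_int a3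
            \<or> real_of_int a3 = - 9 * real q * a1 + 4 * sqrt q * a2 + 16 * real q * sqrt q
            \<or> 2 * sqrt q * \<bar>real q * a1 + a3\<bar> - 2 * real q * a2 - 2 * real q ^ 2 = real_of_int a4)))
     \<and> ((h \<in> W q 4 \<and> (\<exists>x::real. poly (map_poly of_int h) x = 0)) \<longleftrightarrow>
          ((\<exists>m::nat. q = m ^ 2 \<and> (\<exists>h0. h0 \<in> W q 3 \<and>
                (h = [:int m, 1:] ^ 2 * h0 \<or> h = [:- int m, 1:] ^ 2 * h0)))
           \<or> ((\<nexists>m::nat. q = m ^ 2) \<and> (\<exists>h0. h0 \<in> W q 2 \<and> h = [:- int q, 0, 1:] ^ 2 * h0))))
     \<and> \<not> ((\<exists>m::nat. q = m ^ 2 \<and> (\<exists>h0. h0 \<in> W q 3 \<and>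
                (h = [:int m, 1:] ^ 2 * h0 \<or> h = [:- int m, 1:] ^ 2 * h0)))
           \<and> ((\<nexists>m::nat. q = m ^ 2) \<and> (\<exists>h0. h0 \<in> W q 2 \<and> h = [:- int q, 0, 1:] ^ 2 * h0)))"
proof -
  have "q > 0" using assms(1,3) by (simp add: prime_gt_0_nat)
  have reality: "(h \<in> W q 4 \<or> (cond_a q a1 \<and> cond_bstar q a1 a2 \<and> cond_b q a1 a2 \<and>
      cond_c q a1 a2 a3 \<and> cond_d q a1 a2 a3)) \<longrightarrow>
    (\<forall>\<zeta> sD om. admissible q a1 a2 a3 \<zeta> sD om \<longrightarrow> (\<forall>k\<in>{0, 1, 2}. S_elem q a1 a2 a3 \<zeta> sD om k \<in> \<real>))"
    unfolding h_def using Disc_nonpos_if_W_or_conds S_elem_real by blast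
  have W_iff: "h \<in> W q 4 \<longleftrightarrow>
      cond_a q a1 \<and> cond_bstar q a1 a2 \<and> cond_b q a1 a2 \<and> cond_c q a1 a2 a3 \<and>
      cond_d q a1 a2 a3 \<and> cond_e q a1 a2 a3 a4 \<and>
      (\<forall>\<zeta> sD om. admissible q a1 a2 a3 \<zeta> sD om \<longrightarrow> cond_f q a1 a2 a3 a4 \<zeta> sD om)"
    unfolding h_def hpoly_in_W_iff_real_rooted weil_quartic_real_rooted_iff by blast
  have real_root: "h \<in> W q 4 \<longrightarrow> ((\<exists>x::real. poly (map_poly of_int h) x = 0) \<longleftrightarrow>
      weil_bound_attained q a1 a2 a3 a4)"
    unfolding h_def using hpoly_real_root_iff_bound_attained[OF \<open>q > 0\<close>] by blast
  have g: "(3::nat) \<le> 4" "(4::nat) - 1 = 3" "(4::nat) - 2 = 2" by simp_all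
  show ?thesis
    by (intro conjI reality W_iff real_root[unfolded weil_bound_attained_def]
        W_real_root_iff[OF g(1), of h q, unfolded g(2,3)]) blast
qed

end
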